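(* Let $(\bm\gamma^{(\alpha)},\Pi^{(\alpha)})_\alpha\subset\mathfrak{C}$ be a family of characteristics satisfying $$\sup_\alpha\Big(\gamma_b^{(\alpha)}+\int_{\mathcal{Z}}z_b\,\mathrm{d}\Pi^{(\alpha)}(\bm z)\Big)<\infty,$$ and let $(N_0^{(\alpha)})_\alpha$ be a tight family of $(0,\infty)$-valued random variables. Let $(N_t^{(\alpha)})_{t\ge0}$ be the population size process with characteristic $(\bm\gamma^{(\alpha)},\Pi^{(\alpha)})$ started in $N_0^{(\alpha)}$. Then for every finite $T\ge0$ and every $\epsilon>0$ there exists a compact $\Gamma\subseteq[0,\infty)$ such that $$\inf_\alpha\mathbb{P}\big(N_t^{(\alpha)}\in\Gamma\text{ for all }t\in[0,T]\big)\ge1-\epsilon.$$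
   Context: Event space: $\mathcal{Z}:=\big([0,1]\times[0,\infty)\big)\setminus\{(0,0),(1,0)\}$, elements $\bm z=(z_d,z_b)$. The set $\mathfrak{C}$ of characteristics consists of pairs $(\bm\gamma,\Pi)$ with $\bm\gamma=(\gamma_d,\gamma_b)\in[0,\infty)^2$ and $\Pi$ a $\sigma$-finite measure on $\mathcal{Z}$ with $\int z_d\,\mathrm{d}\Pi<\infty$, $\int z_b\,\mathrm{d}\Pi<\infty$ and $\gamma_d+\int z_d\,\mathrm{d}\Pi=\gamma_b+\int z_b\,\mathrm{d}\Pi$. The population size process with characteristic $(\bm\gamma,\Pi)$ is the unique solution of the (well-posed) martingale problem for $\mathcal{L}f(N)=(\gamma_b-\gamma_dN)f'(N)+\int_{\mathcal{Z}}\big(f((1-z_d)N+z_b)-f(N)\big)\mathrm{d}\Pi(\bm z)$, $f\in C_c^2(\mathbb{R})$; equivalently the strong solution of $\mathrm{d}N_t=(\gamma_b-\gamma_dN_t)\mathrm{d}t+\int_{\mathcal{Z}}(z_b-z_dN_{t-})\xi(\mathrm{d}t,\mathrm{d}\bm z)$ with $\xi$ a Poisson point process of intensity $\mathrm{d}t\otimes\Pi$. *)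

theory Defs
  imports "HOL-Probability.Probability"
begin

text \<open>Event space Z = ([0,1] x [0,oo)) minus {(0,0),(1,0)}; z = (z_d, z_b).\<close>
definition event_space :: "(real \<times> real) set" where
  "event_space = ({0..1} \<times> {0..}) - {(0,0),(1,0)}"

text \<open>Characteristics (gamma_d, gamma_b, Pm). Pi is a sigma-finite Borel measure on
  R^2 concentrated on the event space (i.e. a measure on Z extended by zero).\<close>
definition characteristic :: "real \<Rightarrow> real \<Rightarrow> (real \<times> real) measure \<Rightarrow> bool" where
  "characteristic gd gb Pm \<longleftrightarrow>
     0 \<le> gd \<and> 0 \<le> gb \<and>
     sets Pm = sets (borel :: (real \<times> real) measure) \<and>
     emeasure Pm (UNIV - event_space) = 0 \<and>
     sigma_finite_measure Pm \<and>
     integrable Pm fst \<and> integrable Pm snd \<and>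
     gd + (\<integral>z. fst z \<partial>Pm) = gb + (\<integral>z. snd z \<partial>Pm)"

definition C2c :: "(real \<Rightarrow> real) \<Rightarrow> bool" where
  "C2c f \<longleftrightarrow> (\<forall>x. f differentiable (at x)) \<and> (\<forall>x. deriv f differentiable (at x)) \<and>
     continuous_on UNIV (deriv (deriv f)) \<and> compact (closure {x. f x \<noteq> 0})"

definition generator :: "real \<Rightarrow> real \<Rightarrow> (real \<times> real) measure \<Rightarrow> (real \<Rightarrow> real) \<Rightarrow> real \<Rightarrow> real" where
  "generator gd gb Pm f N =
     (gb - gd * N) * deriv f N + (\<integral>z. f ((1 - fst z) * N + snd z) - f N \<partial>Pm)"

definition natural_filtration :: "'a measure \<Rightarrow> (real \<Rightarrow> 'a \<Rightarrow> real) \<Rightarrow> real \<Rightarrow> 'a measure" where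
  "natural_filtration M X t =
     sigma (space M) {X s -` B \<inter> space M | s B. 0 \<le> s \<and> s \<le> t \<and> B \<in> sets (borel :: real measure)}"

definition is_martingale :: "'a measure \<Rightarrow> (real \<Rightarrow> 'a measure) \<Rightarrow> (real \<Rightarrow> 'a \<Rightarrow> real) \<Rightarrow> bool" where
  "is_martingale M F X \<longleftrightarrow>
     (\<forall>t\<ge>0. integrable M (X t) \<and> X t \<in> borel_measurable (F t)) \<and>
     (\<forall>s t. 0 \<le> s \<and> s \<le> t \<longrightarrow> (AE \<omega> in M. real_cond_exp M (F s) (X t) \<omega> = X s \<omega>))"

definition cadlag_paths :: "'a measure \<Rightarrow> (real \<Rightarrow> 'a \<Rightarrow> real) \<Rightarrow> bool" where
  "cadlag_paths M X \<longleftrightarrow>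
     (\<forall>\<omega>\<in>space M. \<forall>t\<ge>0. continuous (at_right t) (\<lambda>s. X s \<omega>) \<and>
        (0 < t \<longrightarrow> (\<exists>l. ((\<lambda>s. X s \<omega>) \<longlongrightarrow> l) (at_left t))))"

text \<open>N is a population size process with characteristic (gd, gb, Pm) on the probability
  space M: a cadlag solution of the martingale problem for the generator above.\<close>
definition population_process ::
  "real \<Rightarrow> real \<Rightarrow> (real \<times> real) measure \<Rightarrow> 'a measure \<Rightarrow> (real \<Rightarrow> 'a \<Rightarrow> real) \<Rightarrow> bool" where
  "population_process gd gb Pm M N \<longleftrightarrow>
     prob_space M \<and>
     (\<forall>t\<ge>0. N t \<in> borel_measurable M) \<and>
     cadlag_paths M N \<and>
     (\<forall>f. C2c f \<longrightarrow>
        is_martingale M (natural_filtration M N)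
          (\<lambda>t \<omega>. f (N t \<omega>) - f (N 0 \<omega>) - (LINT s:{0..t}|lborel. generator gd gb Pm f (N s \<omega>))))"

end

theory Submission
  imports Defs
begin

text \<open>Apply the martingale problem to a \<open>C\<^sup>2\<close> test function \<open>f\<close> that vanishes on \<open>[0, R/2]\<close> and
  equals \<open>1\<close> outside \<open>(-\<delta>, R)\<close>. On \<open>[0, \<infinity>)\<close> the drift \<open>-\<gamma>\<^sub>d N\<close> and the jumps \<open>N \<mapsto> (1 - z\<^sub>d) N\<close> only
  move \<open>N\<close> towards \<open>0\<close>, where \<open>f\<close> does not increase, so \<open>L f \<le> (4/R) (\<gamma>\<^sub>b + \<integral> z\<^sub>b d\<Pi>) \<le> 4C/R\<close>
  uniformly in \<open>\<alpha>\<close>. Hence \<open>f(N\<^sub>t) - 4Ct/R\<close> is a supermartingale, and Ville's maximal inequality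
  along a dyadic grid of \<open>[0, T]\<close> bounds the probability of seeing \<open>N\<close> outside \<open>(-\<delta>, R)\<close> at a grid
  time by \<open>E f(N\<^sub>0) + 4CT/R\<close>. Tightness of \<open>N\<^sub>0\<close> and a large \<open>R\<close> make both terms small uniformly
  in \<open>\<alpha>\<close>, and right continuity of the paths lets the grids, with \<open>\<delta> = 1/(n+1) \<rightarrow> 0\<close>, detect every
  exit from \<open>[0, R]\<close> during \<open>[0, T]\<close>.\<close>

section \<open>A smooth step function\<close>

lemma has_real_derivative_glue:
  fixes f g h :: "real \<Rightarrow> real"
  assumes g: "(g has_real_derivative D) (at x)" and h: "(h has_real_derivative D) (at x)"
    and left: "\<forall>\<^sub>F y in at_left x. f y = g y" and right: "\<forall>\<^sub>F y in at_right x. f y = h y"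
    and "f x = g x" "f x = h x"
  shows "(f has_real_derivative D) (at x)"
proof -
  have "((\<lambda>y. (g y - g x) / (y - x)) \<longlongrightarrow> D) (at_left x)"
    using g unfolding has_field_derivative_iff by (rule tendsto_mono[rotated]) (simp add: at_le)
  then have l: "((\<lambda>y. (f y - f x) / (y - x)) \<longlongrightarrow> D) (at_left x)"
    by (rule Lim_transform_eventually) (use left assms(5) in \<open>auto elim: eventually_mono\<close>)
  have "((\<lambda>y. (h y - h x) / (y - x)) \<longlongrightarrow> D) (at_right x)"
    using h unfolding has_field_derivative_iff by (rule tendsto_mono[rotated]) (simp add: at_le)
  then have r: "((\<lambda>y. (f y - f x) / (y - x)) \<longlongrightarrow> D) (at_right x)"
    by (rule Lim_transform_eventually) (use right assms(6) in \<open>auto elim: eventually_mono\<close>)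
  show ?thesis unfolding has_field_derivative_iff using l r filterlim_at_split by blast
qed

definition clamp01 :: "real \<Rightarrow> real" where "clamp01 v = max 0 (min 1 v)"

lemma clamp01_bounds: "0 \<le> clamp01 v" "clamp01 v \<le> 1"
  by (auto simp: clamp01_def)

lemma has_real_derivative_comp_clamp01:
  fixes q q' :: "real \<Rightarrow> real"
  assumes q: "\<And>x. (q has_real_derivative q' x) (at x)" and "q' 0 = 0" "q' 1 = 0"
  shows "((\<lambda>v. q (clamp01 v)) has_real_derivative q' (clamp01 v)) (at v)"
proof -
  have const0: "((\<lambda>_. q c) has_real_derivative q' 0) (at v)"
   and const1: "((\<lambda>_. q c) has_real_derivative q' 1) (at v)" for c
    using assms(2,3) by (simp_all add: DERIV_const)
  have at_left_right: "\<forall>\<^sub>F y in at_left x. P y" "\<forall>\<^sub>F y in at_right x. P y"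
    if "\<forall>\<^sub>F y in at x. P y" for P and x :: real
    using that eventually_at_split by blast+
  have below: "\<forall>\<^sub>F y in at x. y < b" if "x < b" for x b :: real
    using order_tendstoD(2)[OF tendsto_ident_at that] .
  have above: "\<forall>\<^sub>F y in at x. b < y" if "b < x" for x b :: real
    using order_tendstoD(1)[OF tendsto_ident_at that] .
  have right_gt: "\<forall>\<^sub>F y in at_right x. x < y" and left_lt: "\<forall>\<^sub>F y in at_left x. y < x" for x :: real
    by (simp_all add: eventually_at_filter)
  consider "v < 0" | "v = 0" | "0 < v" "v < 1" | "v = 1" | "1 < v" by linarith
  then show ?thesis
  proof cases
    case 1
    then have "clamp01 v = 0" by (simp add: clamp01_def)
    moreover have "\<forall>\<^sub>F y in at v. q (clamp01 y) = q 0"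
      using below[OF 1] by (rule eventually_mono) (simp add: clamp01_def)
    ultimately show ?thesis
      by (metis has_real_derivative_glue[OF const0 const0] at_left_right)
  next
    case 2
    then have "clamp01 v = 0" by (simp add: clamp01_def)
    moreover have "\<forall>\<^sub>F y in at_left v. q (clamp01 y) = q 0"
      using left_lt[of v] by (rule eventually_mono) (use 2 in \<open>auto simp: clamp01_def\<close>)
    moreover have "\<forall>\<^sub>F y in at_right v. q (clamp01 y) = q y"
      using eventually_conj[OF right_gt[of v] at_left_right(2)[OF below[of v 1]]]
      by (rule eventually_mono) (use 2 in \<open>auto simp: clamp01_def\<close>)
    moreover have "(q has_real_derivative q' 0) (at v)" using q[of v] 2 by simp
    ultimately show ?thesis
      using 2 by (metis has_real_derivative_glue[OF const0])
  next
    case 3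
    then have "clamp01 v = v" by (simp add: clamp01_def)
    moreover have "\<forall>\<^sub>F y in at v. q (clamp01 y) = q y"
      using eventually_conj[OF below[OF 3(2)] above[OF 3(1)]] by (rule eventually_mono) (simp add: clamp01_def)
    ultimately show ?thesis
      by (metis has_real_derivative_glue[OF q q] at_left_right)
  next
    case 4
    then have "clamp01 v = 1" by (simp add: clamp01_def)
    moreover have "\<forall>\<^sub>F y in at_right v. q (clamp01 y) = q 1"
      using right_gt[of v] by (rule eventually_mono) (use 4 in \<open>auto simp: clamp01_def\<close>)
    moreover have "\<forall>\<^sub>F y in at_left v. q (clamp01 y) = q y"
      using eventually_conj[OF left_lt[of v] at_left_right(1)[OF above[of 0 v]]]
      by (rule eventually_mono) (use 4 in \<open>auto simp: clamp01_def\<close>)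
    moreover have "(q has_real_derivative q' 1) (at v)" using q[of v] 4 by simp
    ultimately show ?thesis
      using 4 by (metis has_real_derivative_glue[OF _ const1])
  next
    case 5
    then have "clamp01 v = 1" by (simp add: clamp01_def)
    moreover have "\<forall>\<^sub>F y in at v. q (clamp01 y) = q 1"
      using above[OF 5] by (rule eventually_mono) (simp add: clamp01_def)
    ultimately show ?thesis
      by (metis has_real_derivative_glue[OF const1 const1] at_left_right)
  qed
qed

text \<open>The first and second derivatives of this quintic vanish at \<open>0\<close> and \<open>1\<close>, so clamping its
  argument to \<open>[0, 1]\<close> keeps it \<open>C\<^sup>2\<close>.\<close>
definition quintic_step :: "real \<Rightarrow> real" where "quintic_step v = 6 * v^5 - 15 * v^4 + 10 * v^3"
definition quintic_step' :: "real \<Rightarrow> real" where "quintic_step' v = 30 * v^4 - 60 * v^3 + 30 * v^2"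
definition quintic_step'' :: "real \<Rightarrow> real" where "quintic_step'' v = 120 * v^3 - 180 * v^2 + 60 * v"

lemma has_real_derivative_quintic_step: "(quintic_step has_real_derivative quintic_step' v) (at v)"
  unfolding quintic_step_def quintic_step'_def by (auto intro!: derivative_eq_intros simp: algebra_simps)

lemma has_real_derivative_quintic_step': "(quintic_step' has_real_derivative quintic_step'' v) (at v)"
  unfolding quintic_step'_def quintic_step''_def by (auto intro!: derivative_eq_intros simp: algebra_simps)

definition smooth_step :: "real \<Rightarrow> real" where "smooth_step u = quintic_step (clamp01 (2*u - 1))"
definition smooth_step' :: "real \<Rightarrow> real" where "smooth_step' u = 2 * quintic_step' (clamp01 (2*u - 1))"
definition smooth_step'' :: "real \<Rightarrow> real" where "smooth_step'' u = 4 * quintic_step'' (clamp01 (2*u - 1))"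

lemma has_real_derivative_comp_clamp01_affine:
  assumes q: "\<And>x. (q has_real_derivative q' x) (at x)" and "q' 0 = 0" "q' 1 = 0"
  shows "((\<lambda>u. q (clamp01 (2*u - 1))) has_real_derivative 2 * q' (clamp01 (2*u - 1))) (at u)"
proof -
  have "((\<lambda>u. 2*u - 1) has_real_derivative 2) (at u)"
    by (auto intro!: derivative_eq_intros)
  from DERIV_chain2[OF has_real_derivative_comp_clamp01[OF assms] this] show ?thesis
    by (simp add: mult.commute)
qed

lemma has_real_derivative_smooth_step: "(smooth_step has_real_derivative smooth_step' u) (at u)"
  unfolding smooth_step_def[abs_def] smooth_step'_def
  by (rule has_real_derivative_comp_clamp01_affine[OF has_real_derivative_quintic_step])
     (simp_all add: quintic_step'_def)

lemma has_real_derivative_smooth_step': "(smooth_step' has_real_derivative smooth_step'' u) (at u)"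
proof -
  have "((\<lambda>u. quintic_step' (clamp01 (2*u - 1))) has_real_derivative 2 * quintic_step'' (clamp01 (2*u - 1))) (at u)"
    by (rule has_real_derivative_comp_clamp01_affine[OF has_real_derivative_quintic_step'])
       (simp_all add: quintic_step''_def)
  from DERIV_cmult[OF this, of 2] show ?thesis
    unfolding smooth_step'_def[abs_def] smooth_step''_def by simp
qed

lemma continuous_on_smooth_step'': "continuous_on UNIV smooth_step''"
  unfolding smooth_step''_def quintic_step''_def clamp01_def by (intro continuous_intros)

lemma smooth_step'_bounds: "0 \<le> smooth_step' u" "smooth_step' u \<le> 4"
proof -
  define c where "c = clamp01 (2*u - 1)"
  have "0 \<le> c" "c \<le> 1" using clamp01_bounds c_def by auto
  have eq: "quintic_step' c = 30 * (c * (1 - c))^2"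
    unfolding quintic_step'_def by (simp add: algebra_simps power2_eq_square power4_eq_xxxx power3_eq_cube)
  have "c * (1 - c) \<le> 1/4" using zero_le_power2[of "c - 1/2"] by (simp add: power2_eq_square algebra_simps)
  moreover have "0 \<le> c * (1 - c)" using \<open>0 \<le> c\<close> \<open>c \<le> 1\<close> by simp
  ultimately have "(c * (1 - c))^2 \<le> (1/4)^2" by (intro power_mono)
  then have "(c * (1 - c))^2 \<le> 1/16" by (simp add: power2_eq_square)
  then show "0 \<le> smooth_step' u" "smooth_step' u \<le> 4"
    unfolding smooth_step'_def c_def[symmetric] eq by auto
qed

lemma smooth_step_eq_0: "u \<le> 1/2 \<Longrightarrow> smooth_step u = 0"
  and smooth_step'_eq_0: "u \<le> 1/2 \<Longrightarrow> smooth_step' u = 0"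
  and smooth_step_eq_1: "1 \<le> u \<Longrightarrow> smooth_step u = 1"
  by (auto simp: smooth_step_def smooth_step'_def clamp01_def quintic_step_def quintic_step'_def)

lemma smooth_step_mono_lipschitz:
  assumes "a \<le> b"
  shows "smooth_step a \<le> smooth_step b" "smooth_step b - smooth_step a \<le> 4 * (b - a)"
proof -
  obtain z where "smooth_step b - smooth_step a = (b - a) * smooth_step' z"
  proof (cases "a = b")
    case False
    with assms MVT2[of a b smooth_step smooth_step'] has_real_derivative_smooth_step that
    show ?thesis by force
  qed (use that in simp)
  moreover have "0 \<le> (b - a) * smooth_step' z" "(b - a) * smooth_step' z \<le> (b - a) * 4"
    using assms smooth_step'_bounds[of z] by (intro mult_nonneg_nonneg mult_left_mono; simp)+
  ultimately show "smooth_step a \<le> smooth_step b" "smooth_step b - smooth_step a \<le> 4 * (b - a)"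
    by (simp_all add: mult.commute)
qed

lemma smooth_step_bounds: "0 \<le> smooth_step u" "smooth_step u \<le> 1"
proof -
  show "0 \<le> smooth_step u"
    using smooth_step_mono_lipschitz(1)[of "min u (1/2)" u] by (simp add: smooth_step_eq_0)
  show "smooth_step u \<le> 1"
    using smooth_step_mono_lipschitz(1)[of u "max u 1"] by (simp add: smooth_step_eq_1)
qed

lemma smooth_step_lipschitz: "\<bar>smooth_step a - smooth_step b\<bar> \<le> 4 * \<bar>a - b\<bar>"
  using smooth_step_mono_lipschitz[of a b] smooth_step_mono_lipschitz[of b a] by (cases "a \<le> b") auto

section \<open>A test function detecting exits\<close>

definition exit_weight :: "real \<Rightarrow> real \<Rightarrow> real \<Rightarrow> real" where
  "exit_weight R \<delta> x = smooth_step (x/R) + smooth_step (-x/\<delta>)"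
definition exit_weight' :: "real \<Rightarrow> real \<Rightarrow> real \<Rightarrow> real" where
  "exit_weight' R \<delta> x = smooth_step' (x/R) / R - smooth_step' (-x/\<delta>) / \<delta>"
definition exit_weight'' :: "real \<Rightarrow> real \<Rightarrow> real \<Rightarrow> real" where
  "exit_weight'' R \<delta> x = smooth_step'' (x/R) / R^2 + smooth_step'' (-x/\<delta>) / \<delta>^2"

definition exit_test :: "real \<Rightarrow> real \<Rightarrow> real \<Rightarrow> real" where
  "exit_test R \<delta> x = exit_weight R \<delta> x - 1"

lemma has_real_derivative_comp_divide:
  assumes "\<And>u. (g has_real_derivative g' u) (at u)"
  shows "((\<lambda>x. g (x/c)) has_real_derivative g' (x/c) / c) (at x)"
  using DERIV_chain2[OF assms DERIV_cdivide[OF DERIV_ident, of c x]] by simp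

lemma has_real_derivative_exit_weight: "(exit_weight R \<delta> has_real_derivative exit_weight' R \<delta> x) (at x)"
proof -
  have "((\<lambda>x. smooth_step (x/R) + smooth_step (x/(-\<delta>))) has_real_derivative
          smooth_step' (x/R) / R + smooth_step' (x/(-\<delta>)) / (-\<delta>)) (at x)"
    by (intro DERIV_add has_real_derivative_comp_divide has_real_derivative_smooth_step)
  then show ?thesis unfolding exit_weight_def[abs_def] exit_weight'_def by simp
qed

lemma has_real_derivative_exit_weight':
  assumes "R \<noteq> 0" "\<delta> \<noteq> 0"
  shows "(exit_weight' R \<delta> has_real_derivative exit_weight'' R \<delta> x) (at x)"
proof -
  have "((\<lambda>x. smooth_step' (x/R) / R - smooth_step' (x/(-\<delta>)) / \<delta>) has_real_derivative
          smooth_step'' (x/R) / R / R - smooth_step'' (x/(-\<delta>)) / (-\<delta>) / \<delta>) (at x)"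
    by (intro DERIV_diff DERIV_cdivide has_real_derivative_comp_divide has_real_derivative_smooth_step')
  then show ?thesis
    unfolding exit_weight''_def exit_weight'_def[abs_def] using assms by (simp add: power2_eq_square)
qed

lemma deriv_exit_test: "deriv (exit_test R \<delta>) = exit_weight' R \<delta>"
proof
  fix x
  have "(exit_test R \<delta> has_real_derivative exit_weight' R \<delta> x) (at x)"
    unfolding exit_test_def[abs_def] using DERIV_diff[OF has_real_derivative_exit_weight DERIV_const] by simp
  then show "deriv (exit_test R \<delta>) x = exit_weight' R \<delta> x" by (rule DERIV_imp_deriv)
qed

lemma continuous_on_exit_weight'': "continuous_on UNIV (exit_weight'' R \<delta>)"
proof -
  have "exit_weight'' R \<delta> = (\<lambda>x. smooth_step'' (x * (1/R)) * (1/R^2) + smooth_step'' (x * (-1/\<delta>)) * (1/\<delta>^2))"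
    by (auto simp: exit_weight''_def)
  then show ?thesis
    by (simp only:) (intro continuous_intros continuous_on_compose2[OF continuous_on_smooth_step''], auto)
qed

lemma exit_weight_of_nonneg:
  assumes "0 \<le> x" "0 < \<delta>"
  shows "exit_weight R \<delta> x = smooth_step (x/R)" "exit_weight' R \<delta> x = smooth_step' (x/R) / R"
proof -
  have "0 \<le> x/\<delta>" using assms by simp
  then have "-x/\<delta> \<le> 1/2" by (simp only: minus_divide_left[symmetric])
  then have "smooth_step (-x/\<delta>) = 0" "smooth_step' (-x/\<delta>) = 0"
    by (simp_all only: smooth_step_eq_0 smooth_step'_eq_0)
  then show "exit_weight R \<delta> x = smooth_step (x/R)" "exit_weight' R \<delta> x = smooth_step' (x/R) / R"
    by (simp_all add: exit_weight_def exit_weight'_def)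
qed

lemma exit_weight_of_nonpos:
  assumes "x \<le> 0" "0 < R"
  shows "exit_weight R \<delta> x = smooth_step (-x/\<delta>)" "exit_weight' R \<delta> x = - smooth_step' (-x/\<delta>) / \<delta>"
proof -
  have "x/R \<le> 1/2" using divide_nonpos_pos[OF assms] by linarith
  then have "smooth_step (x/R) = 0" "smooth_step' (x/R) = 0"
    by (simp_all only: smooth_step_eq_0 smooth_step'_eq_0)
  then show "exit_weight R \<delta> x = smooth_step (-x/\<delta>)" "exit_weight' R \<delta> x = - smooth_step' (-x/\<delta>) / \<delta>"
    by (simp_all add: exit_weight_def exit_weight'_def)
qed

lemma exit_weight_bounds:
  assumes "0 < R" "0 < \<delta>"
  shows "0 \<le> exit_weight R \<delta> x" "exit_weight R \<delta> x \<le> 1"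
  using exit_weight_of_nonneg(1)[of x \<delta> R] exit_weight_of_nonpos(1)[of x R \<delta>] assms smooth_step_bounds
  by (cases "0 \<le> x"; auto)+

lemma exit_weight_eq_0: "0 \<le> x \<Longrightarrow> 2 * x \<le> R \<Longrightarrow> 0 < \<delta> \<Longrightarrow> exit_weight R \<delta> x = 0"
  by (simp add: exit_weight_of_nonneg smooth_step_eq_0 divide_le_eq)

lemma exit_weight_eq_1:
  assumes "0 < R" "0 < \<delta>" "x \<notin> {-\<delta><..<R}"
  shows "exit_weight R \<delta> x = 1"
  using exit_weight_of_nonneg(1)[of x \<delta> R] exit_weight_of_nonpos(1)[of x R \<delta>] assms
  by (cases "0 \<le> x") (auto intro!: smooth_step_eq_1 simp: field_simps)

lemma C2c_exit_test:
  assumes "0 < R" "0 < \<delta>"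
  shows "C2c (exit_test R \<delta>)"
  unfolding C2c_def
proof (intro conjI allI)
  have nz: "R \<noteq> 0" "\<delta> \<noteq> 0" using assms by auto
  show "exit_test R \<delta> differentiable (at x)" for x
    unfolding exit_test_def[abs_def] using has_real_derivative_exit_weight
    by (intro derivative_intros) (auto simp: real_differentiable_def)
  show "deriv (exit_test R \<delta>) differentiable (at x)" for x
    unfolding deriv_exit_test using has_real_derivative_exit_weight'[OF nz] real_differentiable_def by blast
  have "deriv (deriv (exit_test R \<delta>)) = exit_weight'' R \<delta>"
    unfolding deriv_exit_test using has_real_derivative_exit_weight'[OF nz] DERIV_imp_deriv by blast
  then show "continuous_on UNIV (deriv (deriv (exit_test R \<delta>)))"
    using continuous_on_exit_weight'' by simp
  have "{x. exit_test R \<delta> x \<noteq> 0} \<subseteq> {-\<delta>..R}"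
  proof
    fix x assume "x \<in> {x. exit_test R \<delta> x \<noteq> 0}"
    then have "x \<in> {-\<delta><..<R}" using exit_weight_eq_1[OF assms, of x] by (auto simp: exit_test_def)
    then show "x \<in> {-\<delta>..R}" by simp
  qed
  then have "bounded {x. exit_test R \<delta> x \<noteq> 0}"
    by (rule bounded_subset[rotated]) simp
  then show "compact (closure {x. exit_test R \<delta> x \<noteq> 0})" by simp
qed

lemma exit_weight'_bounds:
  assumes "0 < R" "0 < \<delta>"
  shows "0 \<le> x \<Longrightarrow> 0 \<le> exit_weight' R \<delta> x \<and> exit_weight' R \<delta> x \<le> 4 / R"
    and "x \<le> 0 \<Longrightarrow> exit_weight' R \<delta> x \<le> 0"
    and "\<bar>exit_weight' R \<delta> x\<bar> \<le> 4/R + 4/\<delta>"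
proof -
  have a: "0 \<le> smooth_step' (x/R) / R" "smooth_step' (x/R) / R \<le> 4/R"
   and b: "0 \<le> smooth_step' (-x/\<delta>) / \<delta>" "smooth_step' (-x/\<delta>) / \<delta> \<le> 4/\<delta>"
    using smooth_step'_bounds[of "x/R"] smooth_step'_bounds[of "-x/\<delta>"] assms
    by (simp_all add: divide_right_mono)
  show "0 \<le> x \<Longrightarrow> 0 \<le> exit_weight' R \<delta> x \<and> exit_weight' R \<delta> x \<le> 4 / R"
    using a assms by (simp add: exit_weight_of_nonneg)
  show "x \<le> 0 \<Longrightarrow> exit_weight' R \<delta> x \<le> 0"
    using b assms by (simp add: exit_weight_of_nonpos)
  show "\<bar>exit_weight' R \<delta> x\<bar> \<le> 4/R + 4/\<delta>"
    unfolding exit_weight'_def abs_le_iff using a b by linarith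
qed

lemma exit_weight_lipschitz:
  assumes "0 < R" "0 < \<delta>"
  shows "\<bar>exit_weight R \<delta> y - exit_weight R \<delta> x\<bar> \<le> (4/R + 4/\<delta>) * \<bar>y - x\<bar>"
proof -
  have "\<bar>exit_weight R \<delta> y - exit_weight R \<delta> x\<bar>
        \<le> \<bar>smooth_step (y/R) - smooth_step (x/R)\<bar> + \<bar>smooth_step (-y/\<delta>) - smooth_step (-x/\<delta>)\<bar>"
    unfolding exit_weight_def by linarith
  also have "\<dots> \<le> 4 * \<bar>y/R - x/R\<bar> + 4 * \<bar>-y/\<delta> - -x/\<delta>\<bar>"
    by (intro add_mono smooth_step_lipschitz)
  also have "\<dots> = (4/R + 4/\<delta>) * \<bar>y - x\<bar>"
    using assms by (simp add: abs_divide diff_divide_distrib[symmetric] algebra_simps)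
  finally show ?thesis .
qed

text \<open>A jump \<open>x \<mapsto> (1 - z\<^sub>d) x + z\<^sub>b\<close> moves toward \<open>0\<close> and then up by \<open>z\<^sub>b\<close>; only the upward part
  can increase the weight, and only through the branch \<open>smooth_step (x/R)\<close>.\<close>
lemma exit_weight_jump_le:
  assumes R: "0 < R" and \<delta>: "0 < \<delta>" and "0 \<le> zd" "zd \<le> 1" "0 \<le> zb"
  shows "exit_weight R \<delta> ((1 - zd) * x + zb) - exit_weight R \<delta> x \<le> 4 / R * zb"
proof -
  define y where "y = (1 - zd) * x + zb"
  have up: "smooth_step (b/R) - smooth_step (a/R) \<le> 4/R * (b - a)" if "a \<le> b" for a b
    using smooth_step_mono_lipschitz(2)[of "a/R" "b/R"] that R
    by (simp add: divide_right_mono diff_divide_distrib)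
  have "exit_weight R \<delta> y - exit_weight R \<delta> x \<le> 4 / R * zb"
  proof (cases "0 \<le> x")
    case True
    then have "0 \<le> y" unfolding y_def using assms by simp
    have "smooth_step (y/R) - smooth_step (x/R) \<le> 4/R * zb"
    proof (cases "x \<le> y")
      case True
      have "y - x \<le> zb" unfolding y_def using \<open>0 \<le> x\<close> assms by (simp add: algebra_simps)
      then have "4/R * (y - x) \<le> 4/R * zb" using R by (intro mult_left_mono) auto
      then show ?thesis using up[OF True] by linarith
    next
      case False
      moreover have "0 \<le> 4/R * zb" using R assms by simp
      ultimately show ?thesis using smooth_step_mono_lipschitz(1)[of "y/R" "x/R"] R
        by (simp add: divide_right_mono)
    qed
    then show ?thesis using exit_weight_of_nonneg(1)[OF \<open>0 \<le> y\<close> \<delta>] exit_weight_of_nonneg(1)[OF True \<delta>] by simp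
  next
    case False
    show ?thesis
    proof (cases "0 \<le> y")
      case True
      have "(1 - zd) * x \<le> 0" using False assms by (simp add: mult_nonneg_nonpos)
      then have "y \<le> zb" unfolding y_def by simp
      have "exit_weight R \<delta> y \<le> 4/R * y"
        using up[OF True] exit_weight_of_nonneg(1)[OF True \<delta>] by (simp add: smooth_step_eq_0)
      also have "\<dots> \<le> 4/R * zb" using \<open>y \<le> zb\<close> R by (intro mult_left_mono) auto
      finally show ?thesis using exit_weight_bounds[OF R \<delta>, of x] by simp
    next
      case False
      have "x * zd \<le> 0" using \<open>\<not> 0 \<le> x\<close> assms by (simp add: mult_nonpos_nonneg)
      then have "x \<le> y" unfolding y_def using assms by (simp add: algebra_simps)
      then have "smooth_step (-y/\<delta>) \<le> smooth_step (-x/\<delta>)"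
        using \<delta> by (intro smooth_step_mono_lipschitz(1)) (simp add: divide_right_mono)
      moreover have "0 \<le> 4 / R * zb" using R assms by simp
      ultimately show ?thesis
        using exit_weight_of_nonpos(1)[of y R \<delta>] exit_weight_of_nonpos(1)[of x R \<delta>] False \<open>\<not> 0 \<le> x\<close> R by simp
    qed
  qed
  then show ?thesis unfolding y_def .
qed

lemma drift_exit_weight'_le:
  assumes R: "0 < R" and \<delta>: "0 < \<delta>" and "0 \<le> gd" "0 \<le> gb"
  shows "(gb - gd * x) * exit_weight' R \<delta> x \<le> gb * (4 / R)"
proof (cases "0 \<le> x")
  case True
  note b = exit_weight'_bounds(1)[OF R \<delta> True]
  have "(gb - gd * x) * exit_weight' R \<delta> x \<le> gb * exit_weight' R \<delta> x"
    using b assms True by (simp add: algebra_simps)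
  also have "\<dots> \<le> gb * (4/R)" using b assms by (intro mult_left_mono) auto
  finally show ?thesis .
next
  case False
  then have "(gb - gd * x) * exit_weight' R \<delta> x \<le> 0"
    using exit_weight'_bounds(2)[OF R \<delta>, of x] assms mult_nonneg_nonpos[of gd x]
    by (intro mult_nonneg_nonpos) auto
  also have "0 \<le> gb * (4/R)" using assms by simp
  finally show ?thesis .
qed

lemma borel_measurable_exit_weight[measurable]: "exit_weight R \<delta> \<in> borel_measurable borel"
  using has_real_derivative_exit_weight
  by (intro borel_measurable_continuous_onI continuous_at_imp_continuous_on) (blast intro: DERIV_isCont)

lemma borel_measurable_exit_weight':
  assumes "R \<noteq> 0" "\<delta> \<noteq> 0"
  shows "exit_weight' R \<delta> \<in> borel_measurable borel"
  using has_real_derivative_exit_weight'[OF assms]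
  by (intro borel_measurable_continuous_onI continuous_at_imp_continuous_on) (blast intro: DERIV_isCont)

section \<open>Generator estimates\<close>

lemma sets_event_space: "event_space \<in> sets (borel :: (real \<times> real) measure)"
proof -
  have "{0..1::real} \<times> {0::real..} \<in> sets borel" by (intro borel_closed closed_Times) auto
  moreover have "{(0::real, 0::real), (1, 0)} \<in> sets borel" by (intro borel_closed finite_imp_closed) auto
  ultimately show ?thesis unfolding event_space_def by (rule sets.Diff)
qed

lemma characteristic_AE_event_space:
  assumes "characteristic gd gb Pm"
  shows "AE z in Pm. z \<in> event_space"
proof (rule AE_I')
  have "UNIV - event_space \<in> sets Pm"
    using assms sets_event_space by (auto simp: characteristic_def)
  then show "UNIV - event_space \<in> null_sets Pm"
    using assms by (simp add: characteristic_def null_sets_def)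
qed auto

lemma event_spaceD: "z \<in> event_space \<Longrightarrow> 0 \<le> fst z \<and> fst z \<le> 1 \<and> 0 \<le> snd z"
  by (auto simp: event_space_def)

lemma generator_exit_test:
  "generator gd gb Pm (exit_test R \<delta>) x =
     (gb - gd * x) * exit_weight' R \<delta> x + (\<integral>z. exit_weight R \<delta> ((1 - fst z) * x + snd z) - exit_weight R \<delta> x \<partial>Pm)"
  unfolding generator_def deriv_exit_test exit_test_def by simp

lemma generator_exit_test_le:
  assumes ch: "characteristic gd gb Pm" and R: "0 < R" and \<delta>: "0 < \<delta>"
  shows "generator gd gb Pm (exit_test R \<delta>) x \<le> 4/R * (gb + (\<integral>z. snd z \<partial>Pm))"
proof -
  have c: "0 \<le> gd" "0 \<le> gb" "integrable Pm snd" using ch by (auto simp: characteristic_def)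
  have AE: "AE z in Pm. z \<in> event_space" by (rule characteristic_AE_event_space[OF ch])
  have "(\<integral>z. exit_weight R \<delta> ((1 - fst z) * x + snd z) - exit_weight R \<delta> x \<partial>Pm) \<le> (\<integral>z. 4/R * snd z \<partial>Pm)"
  proof (rule integral_mono_AE')
    show "integrable Pm (\<lambda>z. 4/R * snd z)" using c by simp
    show "AE z in Pm. exit_weight R \<delta> ((1 - fst z) * x + snd z) - exit_weight R \<delta> x \<le> 4/R * snd z"
      using AE by eventually_elim (use event_spaceD exit_weight_jump_le[OF R \<delta>] in blast)
    show "AE z in Pm. 0 \<le> 4/R * snd z"
      using AE by eventually_elim (use event_spaceD R in auto)
  qed
  moreover have "(gb - gd * x) * exit_weight' R \<delta> x \<le> gb * (4/R)"
    by (rule drift_exit_weight'_le[OF R \<delta> c(1,2)])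
  moreover have "4/R * (gb + (\<integral>z. snd z \<partial>Pm)) = gb * (4/R) + (\<integral>z. 4/R * snd z \<partial>Pm)"
    by (simp add: algebra_simps add_divide_distrib)
  ultimately show ?thesis unfolding generator_exit_test by linarith
qed

lemma generator_exit_test_linear_growth:
  assumes ch: "characteristic gd gb Pm" and R: "0 < R" and \<delta>: "0 < \<delta>"
  shows "\<exists>a b. 0 \<le> b \<and> (\<forall>x. \<bar>generator gd gb Pm (exit_test R \<delta>) x\<bar> \<le> a + b * \<bar>x\<bar>)"
proof -
  define L where "L = 4/R + 4/\<delta>"
  have L: "0 \<le> L" using R \<delta> by (simp add: L_def)
  have c: "0 \<le> gd" "0 \<le> gb" "integrable Pm snd" "integrable Pm fst"
    using ch by (auto simp: characteristic_def)
  have AE: "AE z in Pm. z \<in> event_space" by (rule characteristic_AE_event_space[OF ch])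
  have "\<bar>generator gd gb Pm (exit_test R \<delta>) x\<bar>
          \<le> L * (gb + (\<integral>z. snd z \<partial>Pm)) + L * (gd + (\<integral>z. fst z \<partial>Pm)) * \<bar>x\<bar>" for x
  proof -
    have "\<bar>\<integral>z. exit_weight R \<delta> ((1 - fst z) * x + snd z) - exit_weight R \<delta> x \<partial>Pm\<bar>
          \<le> (\<integral>z. \<bar>exit_weight R \<delta> ((1 - fst z) * x + snd z) - exit_weight R \<delta> x\<bar> \<partial>Pm)"
      using integral_norm_bound[of Pm "\<lambda>z. exit_weight R \<delta> ((1 - fst z) * x + snd z) - exit_weight R \<delta> x"]
      by simp
    also have "\<dots> \<le> (\<integral>z. L * (snd z + \<bar>x\<bar> * fst z) \<partial>Pm)"
    proof (rule integral_mono_AE')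
      show "integrable Pm (\<lambda>z. L * (snd z + \<bar>x\<bar> * fst z))" using c by simp
      show "AE z in Pm. \<bar>exit_weight R \<delta> ((1 - fst z) * x + snd z) - exit_weight R \<delta> x\<bar>
              \<le> L * (snd z + \<bar>x\<bar> * fst z)"
        using AE
      proof eventually_elim
        case (elim z)
        have z: "0 \<le> fst z" "0 \<le> snd z" using event_spaceD[OF elim] by auto
        have "\<bar>exit_weight R \<delta> ((1 - fst z) * x + snd z) - exit_weight R \<delta> x\<bar>
              \<le> L * \<bar>((1 - fst z) * x + snd z) - x\<bar>"
          unfolding L_def by (rule exit_weight_lipschitz[OF R \<delta>])
        also have "\<bar>((1 - fst z) * x + snd z) - x\<bar> \<le> snd z + \<bar>x\<bar> * fst z"
          using z abs_triangle_ineq4[of "snd z" "fst z * x"] by (simp add: algebra_simps abs_mult)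
        finally show ?case using L by (simp add: mult_left_mono)
      qed
      show "AE z in Pm. 0 \<le> L * (snd z + \<bar>x\<bar> * fst z)"
        using AE by eventually_elim (use event_spaceD L in auto)
    qed
    also have "\<dots> = L * ((\<integral>z. snd z \<partial>Pm) + \<bar>x\<bar> * (\<integral>z. fst z \<partial>Pm))"
      using c by simp
    finally have jump: "\<bar>\<integral>z. exit_weight R \<delta> ((1 - fst z) * x + snd z) - exit_weight R \<delta> x \<partial>Pm\<bar>
                         \<le> L * ((\<integral>z. snd z \<partial>Pm) + \<bar>x\<bar> * (\<integral>z. fst z \<partial>Pm))" .
    have "\<bar>gb - gd * x\<bar> \<le> gb + gd * \<bar>x\<bar>"
      using abs_triangle_ineq4[of gb "gd * x"] c by (simp add: abs_mult)
    then have drift: "\<bar>(gb - gd * x) * exit_weight' R \<delta> x\<bar> \<le> (gb + gd * \<bar>x\<bar>) * L"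
      unfolding abs_mult L_def using exit_weight'_bounds(3)[OF R \<delta>, of x] by (intro mult_mono) auto
    have "\<bar>generator gd gb Pm (exit_test R \<delta>) x\<bar>
          \<le> \<bar>(gb - gd * x) * exit_weight' R \<delta> x\<bar>
            + \<bar>\<integral>z. exit_weight R \<delta> ((1 - fst z) * x + snd z) - exit_weight R \<delta> x \<partial>Pm\<bar>"
      unfolding generator_exit_test by (rule abs_triangle_ineq)
    also have "\<dots> \<le> (gb + gd * \<bar>x\<bar>) * L + L * ((\<integral>z. snd z \<partial>Pm) + \<bar>x\<bar> * (\<integral>z. fst z \<partial>Pm))"
      using drift jump by (rule add_mono)
    finally show ?thesis by (simp add: algebra_simps)
  qed
  moreover have "0 \<le> (\<integral>z. fst z \<partial>Pm)"
    using AE by (intro integral_nonneg_AE) (auto elim!: eventually_mono dest: event_spaceD)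
  ultimately show ?thesis using L c by (intro exI[of _ "L * (gd + (\<integral>z. fst z \<partial>Pm))"] exI conjI) auto
qed

lemma borel_measurable_generator_exit_test:
  assumes ch: "characteristic gd gb Pm" and R: "0 < R" and \<delta>: "0 < \<delta>"
  shows "generator gd gb Pm (exit_test R \<delta>) \<in> borel_measurable borel"
proof -
  interpret sigma_finite_measure Pm using ch by (simp add: characteristic_def)
  have "sets Pm = sets (borel \<Otimes>\<^sub>M borel :: (real \<times> real) measure)"
    unfolding borel_prod using ch by (simp add: characteristic_def)
  then have "(\<lambda>(x, z). exit_weight R \<delta> ((1 - fst z) * x + snd z) - exit_weight R \<delta> x)
               \<in> borel_measurable ((borel :: real measure) \<Otimes>\<^sub>M Pm)"
    by (subst measurable_cong_sets[OF sets_pair_measure_cong[OF refl] refl]) (assumption, measurable)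
  then have "(\<lambda>x. \<integral>z. exit_weight R \<delta> ((1 - fst z) * x + snd z) - exit_weight R \<delta> x \<partial>Pm) \<in> borel_measurable borel"
    by (rule borel_measurable_lebesgue_integral[of "\<lambda>x z. _ x z", simplified])
  moreover have "exit_weight' R \<delta> \<in> borel_measurable borel"
    using R \<delta> by (intro borel_measurable_exit_weight') auto
  ultimately show ?thesis unfolding generator_exit_test[abs_def] by measurable
qed

section \<open>Integrability along cadlag paths\<close>

lemma cadlag_locally_bounded:
  fixes g :: "real \<Rightarrow> real"
  assumes rc: "continuous (at_right u) g" and ll: "0 < u \<Longrightarrow> \<exists>l. (g \<longlongrightarrow> l) (at_left u)" and u: "0 \<le> u"
  shows "\<exists>e>0. \<exists>B. \<forall>v. 0 \<le> v \<and> \<bar>v - u\<bar> < e \<longrightarrow> \<bar>g v\<bar> \<le> B"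
proof -
  have "\<forall>\<^sub>F v in at_right u. dist (g v) (g u) < 1"
    using rc unfolding continuous_within by (rule tendstoD) simp
  then obtain b1 where b1: "b1 > u" "\<And>y. u < y \<Longrightarrow> y < b1 \<Longrightarrow> dist (g y) (g u) < 1"
    unfolding eventually_at_right_field by blast
  obtain b2 l where b2: "b2 < u" "\<And>y. b2 < y \<Longrightarrow> y < u \<Longrightarrow> 0 < u \<Longrightarrow> dist (g y) l < 1"
  proof (cases "0 < u")
    case True
    then obtain l where "(g \<longlongrightarrow> l) (at_left u)" using ll by blast
    then have "\<forall>\<^sub>F v in at_left u. dist (g v) l < 1" by (rule tendstoD) simp
    then obtain b where "b < u" "\<And>y. b < y \<Longrightarrow> y < u \<Longrightarrow> dist (g y) l < 1"
      unfolding eventually_at_left_field by blast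
    then show ?thesis using that by blast
  next
    case False
    then show ?thesis using that[of "u - 1" 0] by auto
  qed
  define e where "e = min (b1 - u) (u - b2)"
  have e: "0 < e" using b1 b2 by (simp add: e_def)
  have "\<forall>v. 0 \<le> v \<and> \<bar>v - u\<bar> < e \<longrightarrow> \<bar>g v\<bar> \<le> \<bar>g u\<bar> + \<bar>l\<bar> + 1"
  proof (intro allI impI)
    fix v assume v: "0 \<le> v \<and> \<bar>v - u\<bar> < e"
    consider "v = u" | "u < v" | "v < u" by linarith
    then show "\<bar>g v\<bar> \<le> \<bar>g u\<bar> + \<bar>l\<bar> + 1"
    proof cases
      case 2
      then have "dist (g v) (g u) < 1" using b1 v by (intro b1(2)) (auto simp: e_def)
      then show ?thesis by (simp add: dist_real_def)
    next
      case 3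
      then have "dist (g v) l < 1" using b2 v u by (intro b2(2)) (auto simp: e_def)
      then show ?thesis by (simp add: dist_real_def)
    qed simp
  qed
  then show ?thesis using e by blast
qed

lemma cadlag_bounded_on_Icc:
  fixes g :: "real \<Rightarrow> real"
  assumes rc: "\<And>u. 0 \<le> u \<Longrightarrow> continuous (at_right u) g"
    and ll: "\<And>u. 0 < u \<Longrightarrow> \<exists>l. (g \<longlongrightarrow> l) (at_left u)"
  shows "\<exists>B. \<forall>v\<in>{0..T}. \<bar>g v\<bar> \<le> B"
proof -
  have "\<forall>u\<in>{0..T}. \<exists>e>0. \<exists>B. \<forall>v. 0 \<le> v \<and> \<bar>v - u\<bar> < e \<longrightarrow> \<bar>g v\<bar> \<le> B"
    using cadlag_locally_bounded rc ll by auto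
  then obtain e B where eB: "\<And>u. u \<in> {0..T} \<Longrightarrow> e u > 0 \<and> (\<forall>v. 0 \<le> v \<and> \<bar>v - u\<bar> < e u \<longrightarrow> \<bar>g v\<bar> \<le> B u)"
    by metis
  have "{0..T} \<subseteq> (\<Union>u\<in>{0..T}. ball u (e u))" using eB by force
  then obtain C where C: "C \<subseteq> {0..T}" "finite C" "{0..T} \<subseteq> (\<Union>u\<in>C. ball u (e u))"
    using compactE_image[OF compact_Icc, of "{0..T}" "\<lambda>u. ball u (e u)"] by blast
  have "\<forall>v\<in>{0..T}. \<bar>g v\<bar> \<le> (\<Sum>u\<in>C. \<bar>B u\<bar>)"
  proof
    fix v assume v: "v \<in> {0..T}"
    then obtain u where u: "u \<in> C" "v \<in> ball u (e u)" using C by blast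
    then have "\<bar>g v\<bar> \<le> B u" using eB[of u] C v by (auto simp: dist_real_def abs_minus_commute)
    also have "\<dots> \<le> \<bar>B u\<bar>" by simp
    also have "\<dots> \<le> (\<Sum>u\<in>C. \<bar>B u\<bar>)" using u C by (intro member_le_sum) auto
    finally show "\<bar>g v\<bar> \<le> (\<Sum>u\<in>C. \<bar>B u\<bar>)" .
  qed
  then show ?thesis by blast
qed

lemma borel_measurable_right_continuous:
  fixes h :: "real \<Rightarrow> real"
  assumes rc: "\<And>u. continuous (at_right u) h"
  shows "h \<in> borel_measurable borel"
proof (rule borel_measurable_LIMSEQ_real)
  define dn where "dn n u = real_of_int \<lceil>u * real (Suc n)\<rceil> / real (Suc n)" for n u
  show "(\<lambda>u. h (dn n u)) \<in> borel_measurable borel" for n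
  proof -
    have "(\<lambda>u. \<lceil>u * real (Suc n)\<rceil>) \<in> measurable borel (count_space UNIV)" by measurable
    moreover have "(\<lambda>k::int. h (real_of_int k / real (Suc n))) \<in> measurable (count_space UNIV) borel" by simp
    ultimately have "(\<lambda>u. (\<lambda>k::int. h (real_of_int k / real (Suc n))) (\<lceil>u * real (Suc n)\<rceil>)) \<in> borel_measurable borel"
      by (rule measurable_compose)
    then show ?thesis unfolding dn_def by simp
  qed
  show "(\<lambda>n. h (dn n u)) \<longlonglongrightarrow> h u" for u
  proof -
    have "continuous (at u within {u..}) h" using rc[of u] by (simp add: at_within_Ici_at_right)
    moreover have "\<forall>n. dn n u \<in> {u..}"
    proof
      fix n
      have "u * real (Suc n) \<le> real_of_int \<lceil>u * real (Suc n)\<rceil>" by simp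
      then show "dn n u \<in> {u..}" unfolding dn_def by (simp add: field_simps)
    qed
    moreover have "(\<lambda>n. dn n u) \<longlonglongrightarrow> u"
    proof -
      have le: "dn n u \<le> u + 1 / real (Suc n)" for n
      proof -
        have a: "real_of_int \<lceil>u * real (Suc n)\<rceil> < u * real (Suc n) + 1"
          by linarith
        then have "real_of_int \<lceil>u * real (Suc n)\<rceil> / real (Suc n) \<le> (u * real (Suc n) + 1) / real (Suc n)"
          by (intro divide_right_mono) auto
        then show ?thesis unfolding dn_def by (simp add: add_divide_distrib)
      qed
      have "(\<lambda>n. 1 / real (Suc n)) \<longlonglongrightarrow> 0" using LIMSEQ_Suc[OF lim_const_over_n[of 1]] by simp
      then have "(\<lambda>n. u + 1 / real (Suc n)) \<longlonglongrightarrow> u + 0" by (intro tendsto_add tendsto_const)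
      then have up: "(\<lambda>n. u + 1 / real (Suc n)) \<longlonglongrightarrow> u" by simp
      show ?thesis
        by (rule tendsto_sandwich[OF _ _ tendsto_const up]) (use le \<open>\<forall>n. dn n u \<in> {u..}\<close> in auto)
    qed
    ultimately show ?thesis using continuous_within_sequentially[of u "{u..}" h] by (auto simp: comp_def)
  qed
qed

lemma set_integrable_comp_cadlag:
  fixes G p :: "real \<Rightarrow> real"
  assumes Gm: "G \<in> borel_measurable borel" and Gb: "\<And>x. \<bar>G x\<bar> \<le> a + b * \<bar>x\<bar>" and b: "0 \<le> b"
    and rc: "\<And>u. 0 \<le> u \<Longrightarrow> continuous (at_right u) p"
    and ll: "\<And>u. 0 < u \<Longrightarrow> \<exists>l. (p \<longlongrightarrow> l) (at_left u)" and t: "0 \<le> t"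
  shows "set_integrable lborel {0..t} (\<lambda>s. G (p s))"
proof -
  define h where "h u = p (max 0 (min t u))" for u
  have hrc: "continuous (at_right u) h" for u
  proof -
    consider "u < 0" | "0 \<le> u" "u < t" | "t \<le> u" by linarith
    then show ?thesis
    proof cases
      case 1
      have "\<forall>\<^sub>F v in at_right u. h u = h v"
        using eventually_at_right_real[OF 1] by (rule eventually_mono) (use 1 in \<open>auto simp: h_def\<close>)
      then have "(h \<longlongrightarrow> h u) (at_right u)" by (rule Lim_transform_eventually[OF tendsto_const])
      then show ?thesis unfolding continuous_within .
    next
      case 2
      have "\<forall>\<^sub>F v in at_right u. p v = h v"
        using eventually_at_right_real[OF 2(2)] by (rule eventually_mono) (use 2 in \<open>auto simp: h_def\<close>)
      moreover have "(p \<longlongrightarrow> p u) (at_right u)" using rc[OF 2(1)] unfolding continuous_within .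
      ultimately have "(h \<longlongrightarrow> p u) (at_right u)" by (rule Lim_transform_eventually[rotated])
      moreover have "h u = p u" using 2 by (simp add: h_def)
      ultimately show ?thesis unfolding continuous_within by simp
    next
      case 3
      have "\<forall>\<^sub>F v in at_right u. h u = h v"
        using eventually_at_right_real[of u "u+1"] by (rule eventually_mono) (use 3 t in \<open>auto simp: h_def\<close>)
      then have "(h \<longlongrightarrow> h u) (at_right u)" by (rule Lim_transform_eventually[OF tendsto_const])
      then show ?thesis unfolding continuous_within .
    qed
  qed
  have hm: "h \<in> borel_measurable borel" by (rule borel_measurable_right_continuous[OF hrc])
  have eq: "(\<lambda>s. indicator {0..t} s *\<^sub>R G (p s)) = (\<lambda>s. indicator {0..t} s *\<^sub>R G (h s))"
    by (rule ext) (auto simp: h_def indicator_def)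
  obtain B where B: "\<And>v. v \<in> {0..t} \<Longrightarrow> \<bar>p v\<bar> \<le> B" using cadlag_bounded_on_Icc[OF rc ll, of t] by blast
  show ?thesis unfolding set_integrable_def eq
  proof (rule integrableI_bounded_set[where A="{0..t}" and B="a + b * B"])
    show "(\<lambda>s. indicator {0..t} s *\<^sub>R G (h s)) \<in> borel_measurable lborel"
      using Gm hm by measurable
    show "emeasure lborel {0..t} < \<infinity>" using t by (simp add: emeasure_lborel_Icc)
    show "AE x in lborel. x \<in> {0..t} \<longrightarrow> norm (indicator {0..t} x *\<^sub>R G (h x)) \<le> a + b * B"
    proof (intro AE_I2 impI)
      fix x :: real assume x: "x \<in> {0..t}"
      have "norm (indicator {0..t} x *\<^sub>R G (h x)) = \<bar>G (p x)\<bar>" using x by (simp add: h_def)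
      also have "\<dots> \<le> a + b * \<bar>p x\<bar>" by (rule Gb)
      also have "\<dots> \<le> a + b * B" using B[OF x] b by (simp add: mult_left_mono)
      finally show "norm (indicator {0..t} x *\<^sub>R G (h x)) \<le> a + b * B" .
    qed
    show "AE x in lborel. x \<notin> {0..t} \<longrightarrow> indicator {0..t} x *\<^sub>R G (h x) = 0" by simp
  qed simp
qed

section \<open>The martingale problem and a maximal inequality\<close>

lemma natural_filtration_generators_Pow:
  "{N r -` B \<inter> space M | r B. 0 \<le> r \<and> r \<le> t \<and> B \<in> sets (borel :: real measure)} \<subseteq> Pow (space M)"
  by auto

lemma space_natural_filtration: "space (natural_filtration M N t) = space M"
  unfolding natural_filtration_def by (rule space_measure_of[OF natural_filtration_generators_Pow])

lemma sets_natural_filtration: "sets (natural_filtration M N t) =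
   sigma_sets (space M) {N r -` B \<inter> space M | r B. 0 \<le> r \<and> r \<le> t \<and> B \<in> sets (borel :: real measure)}"
  unfolding natural_filtration_def by (rule sets_measure_of[OF natural_filtration_generators_Pow])

lemma vimage_in_natural_filtration:
  assumes "0 \<le> r" "r \<le> t" "B \<in> sets borel"
  shows "N r -` B \<inter> space M \<in> sets (natural_filtration M N t)"
  unfolding sets_natural_filtration using assms by (intro sigma_sets.Basic) blast

lemma subalgebra_natural_filtration:
  assumes "\<And>t. 0 \<le> t \<Longrightarrow> N t \<in> borel_measurable M"
  shows "subalgebra M (natural_filtration M N t)"
proof -
  have "{N r -` B \<inter> space M | r B. 0 \<le> r \<and> r \<le> t \<and> B \<in> sets (borel :: real measure)} \<subseteq> sets M"
    using assms by (auto intro: measurable_sets)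
  then have "sets (natural_filtration M N t) \<subseteq> sets M"
    unfolding sets_natural_filtration by (rule sets.sigma_sets_subset)
  then show ?thesis unfolding subalgebra_def space_natural_filtration by simp
qed

lemma martingale_indicator_integral_eq:
  assumes "prob_space M" and sub: "subalgebra M (F s)" and mart: "is_martingale M F X"
    and st: "0 \<le> s" "s \<le> t" and B: "B \<in> sets (F s)"
  shows "(\<integral>\<omega>. indicator B \<omega> * X t \<omega> \<partial>M) = (\<integral>\<omega>. indicator B \<omega> * X s \<omega> \<partial>M)"
proof -
  interpret prob_space M by fact
  interpret finite_measure_subalgebra M "F s" by unfold_locales (rule sub)
  have int: "integrable M (X t)" and ae: "AE \<omega> in M. real_cond_exp M (F s) (X t) \<omega> = X s \<omega>"
    using mart st unfolding is_martingale_def by auto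
  have [measurable]: "B \<in> sets M" using B subalg by (auto simp: subalgebra_def)
  have [measurable]: "X s \<in> borel_measurable M" using mart st unfolding is_martingale_def by auto
  have [measurable]: "real_cond_exp M (F s) (X t) \<in> borel_measurable M"
    by (rule borel_measurable_cond_exp2)
  have "(\<integral>\<omega>\<in>B. X t \<omega> \<partial>M) = (\<integral>\<omega>\<in>B. real_cond_exp M (F s) (X t) \<omega> \<partial>M)"
    by (rule real_cond_exp_intA[OF int B])
  also have "\<dots> = (\<integral>\<omega>\<in>B. X s \<omega> \<partial>M)"
    unfolding set_lebesgue_integral_def
    by (rule integral_cong_AE) (use ae in \<open>auto elim: eventually_mono\<close>)
  finally show ?thesis unfolding set_lebesgue_integral_def by (simp add: mult.commute)
qed

lemma set_integral_Icc_diff_le: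
  fixes g :: "real \<Rightarrow> real"
  assumes int: "set_integrable lborel {0..t} g" and st: "0 \<le> s" "s \<le> t"
    and le: "\<And>x. g x \<le> K" and "0 \<le> K"
  shows "(LINT u:{0..t}|lborel. g u) - (LINT u:{0..s}|lborel. g u) \<le> K * (t - s)"
proof -
  have "set_integrable lborel {0..s} g"
    by (rule set_integrable_subset[OF int]) (use st in auto)
  then have "(LINT u:{0..t}|lborel. g u) - (LINT u:{0..s}|lborel. g u)
      = (\<integral>u. indicator {0..t} u * g u - indicator {0..s} u * g u \<partial>lborel)"
    using int unfolding set_lebesgue_integral_def set_integrable_def by simp
  also have "\<dots> = (\<integral>u. indicator {s<..t} u * g u \<partial>lborel)"
    using st by (intro Bochner_Integration.integral_cong) (auto simp: indicator_def)
  also have "\<dots> \<le> (\<integral>u. indicator {s<..t} u * K \<partial>lborel)"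
  proof (rule integral_mono')
    show "integrable lborel (\<lambda>u. indicator {s<..t} u * K)"
      using st by (intro integrable_mult_left integrable_real_indicator) (auto simp: emeasure_lborel_Ioc)
  qed (use le \<open>0 \<le> K\<close> in \<open>auto simp: indicator_def\<close>)
  also have "\<dots> = K * (t - s)" using st by (simp add: measure_lborel_Ioc mult.commute)
  finally show ?thesis .
qed

text \<open>The integrated form of: \<open>f(N\<^sub>t) - K t\<close> is a supermartingale.\<close>
lemma martingale_problem_increment_le:
  fixes f G :: "real \<Rightarrow> real" and N :: "real \<Rightarrow> 'a \<Rightarrow> real"
  assumes "prob_space M" and sub: "subalgebra M (F s)"
    and mart: "is_martingale M F (\<lambda>t \<omega>. f (N t \<omega>) - f (N 0 \<omega>) - (LINT u:{0..t}|lborel. G (N u \<omega>)))"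
    and int_f: "integrable M (\<lambda>\<omega>. f (N s \<omega>))" "integrable M (\<lambda>\<omega>. f (N t \<omega>))"
    and int_G: "\<And>\<omega>. \<omega> \<in> space M \<Longrightarrow> set_integrable lborel {0..t} (\<lambda>u. G (N u \<omega>))"
    and G_le: "\<And>x. G x \<le> K" and "0 \<le> K"
    and st: "0 \<le> s" "s \<le> t" and B: "B \<in> sets (F s)"
  shows "(\<integral>\<omega>. indicator B \<omega> * (f (N t \<omega>) - f (N s \<omega>)) \<partial>M) \<le> K * (t - s) * measure M B"
proof -
  interpret prob_space M by fact
  define X where "X t \<omega> = f (N t \<omega>) - f (N 0 \<omega>) - (LINT u:{0..t}|lborel. G (N u \<omega>))" for t \<omega>
  have [measurable]: "B \<in> sets M" using B sub by (auto simp: subalgebra_def)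
  have int_B: "integrable M (\<lambda>\<omega>. indicator B \<omega> * h \<omega>)" if "integrable M h" for h :: "'a \<Rightarrow> real"
    using integrable_real_mult_indicator[OF _ that] by (simp add: mult.commute)
  have int_Xr: "integrable M (X r)" if "0 \<le> r" for r
    using mart that unfolding is_martingale_def X_def by blast
  then have int_X: "integrable M (\<lambda>\<omega>. indicator B \<omega> * (X t \<omega> - X s \<omega>))"
    using st by (intro int_B Bochner_Integration.integrable_diff) auto
  have "(\<integral>\<omega>. indicator B \<omega> * X t \<omega> \<partial>M) = (\<integral>\<omega>. indicator B \<omega> * X s \<omega> \<partial>M)"
    using martingale_indicator_integral_eq[OF \<open>prob_space M\<close> sub mart[folded X_def] st B] .
  then have X_incr: "(\<integral>\<omega>. indicator B \<omega> * (X t \<omega> - X s \<omega>) \<partial>M) = 0"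
    using int_Xr st
    by (simp add: right_diff_distrib Bochner_Integration.integral_diff int_B)
  define D where "D \<omega> = indicator B \<omega> * (f (N t \<omega>) - f (N s \<omega>)) - indicator B \<omega> * (X t \<omega> - X s \<omega>)" for \<omega>
  have "integrable M (\<lambda>\<omega>. indicator B \<omega> * (f (N t \<omega>) - f (N s \<omega>)))"
    using int_f by (intro int_B Bochner_Integration.integrable_diff)
  then have int_D: "integrable M D"
    unfolding D_def using int_X by (rule Bochner_Integration.integrable_diff)
  have "(\<integral>\<omega>. indicator B \<omega> * (f (N t \<omega>) - f (N s \<omega>)) \<partial>M)
        = (\<integral>\<omega>. D \<omega> \<partial>M) + (\<integral>\<omega>. indicator B \<omega> * (X t \<omega> - X s \<omega>) \<partial>M)"
    by (subst Bochner_Integration.integral_add[OF int_D int_X, symmetric]) (simp add: D_def)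
  also have "\<dots> = (\<integral>\<omega>. D \<omega> \<partial>M)" using X_incr by simp
  also have "\<dots> \<le> (\<integral>\<omega>. indicator B \<omega> * (K * (t - s)) \<partial>M)"
  proof (rule integral_mono[OF int_D])
    show "integrable M (\<lambda>\<omega>. indicator B \<omega> * (K * (t - s)))" by (intro int_B) simp
    fix \<omega> assume "\<omega> \<in> space M"
    have "D \<omega> = indicator B \<omega> * ((LINT u:{0..t}|lborel. G (N u \<omega>)) - (LINT u:{0..s}|lborel. G (N u \<omega>)))"
      unfolding D_def X_def by (simp add: algebra_simps)
    moreover have "(LINT u:{0..t}|lborel. G (N u \<omega>)) - (LINT u:{0..s}|lborel. G (N u \<omega>)) \<le> K * (t - s)"
      by (rule set_integral_Icc_diff_le[OF int_G[OF \<open>\<omega> \<in> space M\<close>] st G_le \<open>0 \<le> K\<close>])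
    ultimately show "D \<omega> \<le> indicator B \<omega> * (K * (t - s))" by (simp add: indicator_def)
  qed
  also have "\<dots> = K * (t - s) * measure M B" by simp
  finally show ?thesis .
qed

text \<open>Ville's inequality for a nonnegative sequence that is a supermartingale up to its first passage above \<open>1\<close>.\<close>
lemma ville_inequality:
  fixes W :: "nat \<Rightarrow> 'a \<Rightarrow> real"
  assumes P: "prob_space M"
    and int_W: "\<And>k. integrable M (W k)"
    and W_nonneg: "\<And>k \<omega>. \<omega> \<in> space M \<Longrightarrow> 0 \<le> W k \<omega>"
    and step: "\<And>j. (\<integral>\<omega>. indicator {\<omega> \<in> space M. \<forall>i\<le>j. W i \<omega> < 1} \<omega> * (W (Suc j) \<omega> - W j \<omega>) \<partial>M) \<le> 0"
  shows "measure M {\<omega> \<in> space M. \<exists>k\<le>m. 1 \<le> W k \<omega>} \<le> (\<integral>\<omega>. W 0 \<omega> \<partial>M)"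
proof -
  interpret prob_space M by (rule P)
  have Wm[measurable]: "W k \<in> borel_measurable M" for k using int_W[of k] by (rule borel_measurable_integrable)
  define Below where "Below j = {\<omega> \<in> space M. \<forall>i\<le>j. W i \<omega> < 1}" for j
  have Below_sets[measurable]: "Below j \<in> sets M" for j unfolding Below_def by measurable
  txt \<open>\<open>Stopped j\<close> is \<open>W j\<close> stopped at the first passage above \<open>1\<close>.\<close>
  define Stopped where "Stopped j \<omega> = W 0 \<omega> + (\<Sum>i<j. indicator (Below i) \<omega> * (W (Suc i) \<omega> - W i \<omega>))" for j \<omega>
  have inv: "(\<omega> \<in> Below j \<longrightarrow> Stopped j \<omega> = W j \<omega>) \<and> (\<omega> \<notin> Below j \<longrightarrow> 1 \<le> Stopped j \<omega>)" if \<omega>: "\<omega> \<in> space M" for j \<omega>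
  proof (induction j)
    case 0
    then show ?case using \<omega> by (auto simp: Stopped_def Below_def)
  next
    case (Suc j)
    have Below_Suc: "\<omega> \<in> Below (Suc j) \<longleftrightarrow> \<omega> \<in> Below j \<and> W (Suc j) \<omega> < 1"
      unfolding Below_def using \<omega> by (auto simp: le_Suc_eq)
    have Stopped_Suc: "Stopped (Suc j) \<omega> = Stopped j \<omega> + indicator (Below j) \<omega> * (W (Suc j) \<omega> - W j \<omega>)"
      unfolding Stopped_def by simp
    show ?case
    proof (cases "\<omega> \<in> Below j")
      case True
      then have "Stopped (Suc j) \<omega> = W (Suc j) \<omega>" using Suc Stopped_Suc by simp
      then show ?thesis using Below_Suc True by auto
    next
      case False
      then show ?thesis using Suc Stopped_Suc Below_Suc by simp
    qed
  qed
  have A: "{\<omega> \<in> space M. \<exists>k\<le>m. 1 \<le> W k \<omega>} = space M - Below m"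
    unfolding Below_def by (auto simp: not_less)
  have int_incr: "integrable M (\<lambda>\<omega>. indicator (Below i) \<omega> * (W (Suc i) \<omega> - W i \<omega>))" for i
    using integrable_real_mult_indicator[OF Below_sets Bochner_Integration.integrable_diff[OF int_W int_W]]
    by (simp add: mult.commute)
  have int_Stopped: "integrable M (Stopped m)" unfolding Stopped_def[abs_def]
    by (intro Bochner_Integration.integrable_add Bochner_Integration.integrable_sum int_W int_incr)
  have "measure M {\<omega> \<in> space M. \<exists>k\<le>m. 1 \<le> W k \<omega>} = (\<integral>\<omega>. indicator (space M - Below m) \<omega> \<partial>M)"
    unfolding A by simp
  also have "\<dots> \<le> (\<integral>\<omega>. Stopped m \<omega> \<partial>M)"
  proof (rule integral_mono[OF _ int_Stopped])
    show "integrable M (indicator (space M - Below m) :: 'a \<Rightarrow> real)"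
      by (intro integrable_real_indicator) (simp_all add: less_top[symmetric] emeasure_finite)
    fix \<omega> assume \<omega>: "\<omega> \<in> space M"
    show "indicator (space M - Below m) \<omega> \<le> Stopped m \<omega>"
    proof (cases "\<omega> \<in> Below m")
      case True
      then show ?thesis using inv[OF \<omega>, of m] W_nonneg[OF \<omega>, of m] by simp
    next
      case False
      then show ?thesis using inv[OF \<omega>, of m] \<omega> by simp
    qed
  qed
  also have "\<dots> = (\<integral>\<omega>. W 0 \<omega> \<partial>M) + (\<Sum>i<m. \<integral>\<omega>. indicator (Below i) \<omega> * (W (Suc i) \<omega> - W i \<omega>) \<partial>M)"
    unfolding Stopped_def
    by (subst Bochner_Integration.integral_add[OF int_W Bochner_Integration.integrable_sum[OF int_incr]],
        subst Bochner_Integration.integral_sum[OF int_incr]) (rule refl)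
  also have "\<dots> \<le> (\<integral>\<omega>. W 0 \<omega> \<partial>M)"
    using step unfolding Below_def by (simp add: sum_nonpos)
  finally show ?thesis .
qed

text \<open>Ville's inequality for the nonnegative supermartingale \<open>W\<^sub>k = f(N(\<tau>\<^sub>k)) + 1 + K (T - \<tau>\<^sub>k)\<close>.\<close>
lemma martingale_problem_maximal_inequality:
  fixes f G :: "real \<Rightarrow> real" and N :: "real \<Rightarrow> 'a \<Rightarrow> real" and \<tau> :: "nat \<Rightarrow> real"
  assumes "prob_space M" and meas: "\<And>t. 0 \<le> t \<Longrightarrow> N t \<in> borel_measurable M"
    and mart: "is_martingale M (natural_filtration M N)
                 (\<lambda>t \<omega>. f (N t \<omega>) - f (N 0 \<omega>) - (LINT u:{0..t}|lborel. G (N u \<omega>)))"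
    and f_meas: "f \<in> borel_measurable borel" and f_bdd: "\<And>x. \<bar>f x\<bar> \<le> c" and f_ge: "\<And>x. -1 \<le> f x"
    and int_G: "\<And>\<omega> t. \<omega> \<in> space M \<Longrightarrow> 0 \<le> t \<Longrightarrow> set_integrable lborel {0..t} (\<lambda>u. G (N u \<omega>))"
    and G_le: "\<And>x. G x \<le> K" and "0 \<le> K"
    and \<tau>: "mono \<tau>" "\<tau> 0 = 0" "\<And>k. \<tau> k \<le> T"
  shows "measure M {\<omega> \<in> space M. \<exists>k\<le>m. 0 \<le> f (N (\<tau> k) \<omega>) + K * (T - \<tau> k)}
          \<le> (\<integral>\<omega>. f (N 0 \<omega>) \<partial>M) + 1 + K * T"
proof -
  interpret prob_space M by fact
  have \<tau>_nonneg: "0 \<le> \<tau> k" for k using \<tau>(1,2) by (metis le0 monoD)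
  have int_f: "integrable M (\<lambda>\<omega>. f (N r \<omega>))" if "0 \<le> r" for r
    using meas[OF that] f_meas f_bdd by (intro integrable_const_bound[where B=c]) auto
  define W where "W k \<omega> = f (N (\<tau> k) \<omega>) + 1 + K * (T - \<tau> k)" for k \<omega>
  have int_W: "integrable M (W k)" for k
    unfolding W_def[abs_def] using int_f[OF \<tau>_nonneg[of k]] by simp
  have W_nonneg: "0 \<le> W k \<omega>" for k \<omega>
    using f_ge[of "N (\<tau> k) \<omega>"] \<open>0 \<le> K\<close> \<tau>(3)[of k] by (simp add: W_def)
  have "(\<integral>\<omega>. indicator {\<omega> \<in> space M. \<forall>i\<le>j. W i \<omega> < 1} \<omega> * (W (Suc j) \<omega> - W j \<omega>) \<partial>M) \<le> 0" for j
  proof -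
    define B where "B = {\<omega> \<in> space M. \<forall>i\<le>j. W i \<omega> < 1}"
    have "B = (\<Inter>i\<in>{..j}. N (\<tau> i) -` {x. f x + 1 + K * (T - \<tau> i) < 1} \<inter> space M)"
      unfolding B_def W_def by auto
    also have "\<dots> \<in> sets (natural_filtration M N (\<tau> j))"
      using \<tau>_nonneg \<tau>(1) f_meas
      by (intro sets.finite_INT vimage_in_natural_filtration) (auto intro: monoD)
    finally have B: "B \<in> sets (natural_filtration M N (\<tau> j))" .
    have sub: "subalgebra M (natural_filtration M N (\<tau> j))"
      by (rule subalgebra_natural_filtration[OF meas])
    have "B \<in> sets M" using B sub by (auto simp: subalgebra_def)
    then have int_B: "integrable M (\<lambda>\<omega>. indicator B \<omega> * h \<omega>)" if "integrable M h" for h :: "'a \<Rightarrow> real"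
      using integrable_real_mult_indicator[OF _ that] by (simp add: mult.commute)
    have st: "0 \<le> \<tau> j" "\<tau> j \<le> \<tau> (Suc j)" using \<tau>_nonneg \<tau>(1) by (auto intro: monoD)
    have "(\<integral>\<omega>. indicator B \<omega> * (W (Suc j) \<omega> - W j \<omega>) \<partial>M)
        = (\<integral>\<omega>. indicator B \<omega> * (f (N (\<tau> (Suc j)) \<omega>) - f (N (\<tau> j) \<omega>))
              - indicator B \<omega> * (K * (\<tau> (Suc j) - \<tau> j)) \<partial>M)"
      unfolding W_def by (intro Bochner_Integration.integral_cong) (auto simp: algebra_simps)
    also have "\<dots> = (\<integral>\<omega>. indicator B \<omega> * (f (N (\<tau> (Suc j)) \<omega>) - f (N (\<tau> j) \<omega>)) \<partial>M)
                   - (\<integral>\<omega>. indicator B \<omega> * (K * (\<tau> (Suc j) - \<tau> j)) \<partial>M)"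
      using \<tau>_nonneg by (intro Bochner_Integration.integral_diff int_B Bochner_Integration.integrable_diff int_f) auto
    also have "(\<integral>\<omega>. indicator B \<omega> * (K * (\<tau> (Suc j) - \<tau> j)) \<partial>M) = K * (\<tau> (Suc j) - \<tau> j) * measure M B"
      using sets.sets_into_space[OF \<open>B \<in> sets M\<close>] by (simp add: Int_absorb2)
    also have "(\<integral>\<omega>. indicator B \<omega> * (f (N (\<tau> (Suc j)) \<omega>) - f (N (\<tau> j) \<omega>)) \<partial>M)
               - K * (\<tau> (Suc j) - \<tau> j) * measure M B \<le> 0"
      using martingale_problem_increment_le[OF \<open>prob_space M\<close> sub mart int_f int_f int_G G_le \<open>0 \<le> K\<close> st B]
        \<tau>_nonneg by simp
    finally show ?thesis unfolding B_def .
  qed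
  then have "measure M {\<omega> \<in> space M. \<exists>k\<le>m. 1 \<le> W k \<omega>} \<le> (\<integral>\<omega>. W 0 \<omega> \<partial>M)"
    by (intro ville_inequality[OF \<open>prob_space M\<close> int_W W_nonneg])
  also have "(\<integral>\<omega>. W 0 \<omega> \<partial>M) = (\<integral>\<omega>. f (N 0 \<omega>) \<partial>M) + 1 + K * T"
    unfolding W_def \<tau>(2) using int_f[of 0] by (simp add: prob_space)
  finally show ?thesis unfolding W_def by simp
qed

section \<open>Dyadic grids\<close>

definition dyadic_time :: "real \<Rightarrow> nat \<Rightarrow> nat \<Rightarrow> real" where
  "dyadic_time T n k = T * real k / 2^n"

lemma dyadic_time_nonneg: "0 \<le> T \<Longrightarrow> 0 \<le> dyadic_time T n k"
  by (simp add: dyadic_time_def)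

lemma dyadic_time_le:
  assumes "0 \<le> T" "k \<le> 2^n"
  shows "dyadic_time T n k \<le> T"
proof -
  have "real k \<le> 2^n" using assms(2) by (metis of_nat_le_iff of_nat_numeral of_nat_power)
  then have "T * real k \<le> T * 2^n" using assms(1) by (intro mult_left_mono) auto
  then show ?thesis unfolding dyadic_time_def by (simp add: divide_le_eq)
qed

lemma dyadic_time_dense:
  assumes t: "0 \<le> t" "t < T" and h: "0 < h"
  shows "\<exists>n k. k \<le> 2^n \<and> t < dyadic_time T n k \<and> dyadic_time T n k < t + h"
proof -
  obtain n where n: "T / h < 2^n" using real_arch_pow[of 2 "T / h"] by auto
  then have small: "T / 2^n < h" using h t by (simp add: field_simps)
  define P where "P k \<longleftrightarrow> t < dyadic_time T n k" for k
  have "P (2^n)" unfolding P_def dyadic_time_def using t by simp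
  define k where "k = (LEAST k. P k)"
  have Pk: "P k" "k \<le> 2^n"
    unfolding k_def by (rule LeastI[of P, OF \<open>P (2^n)\<close>], rule Least_le[of P, OF \<open>P (2^n)\<close>])
  have "k \<noteq> 0"
  proof
    assume "k = 0"
    then show False using Pk t unfolding P_def dyadic_time_def by simp
  qed
  then have "\<not> P (k - 1)" unfolding k_def by (intro not_less_Least) (auto simp: k_def[symmetric])
  moreover have "dyadic_time T n (k - 1) = dyadic_time T n k - T / 2^n"
    using \<open>k \<noteq> 0\<close> by (simp add: dyadic_time_def of_nat_diff field_simps)
  ultimately have "dyadic_time T n k < t + h" using small unfolding P_def by linarith
  then show ?thesis using Pk unfolding P_def by blast
qed

lemma dyadic_time_refine:
  assumes "k \<le> 2^n" "n \<le> n'"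
  shows "\<exists>k'. k' \<le> 2^n' \<and> dyadic_time T n' k' = dyadic_time T n k"
proof (intro exI conjI)
  have "(2::nat)^n' = 2^n * 2^(n' - n)" and "(2::real)^n' = 2^n * 2^(n' - n)"
    using assms(2) by (simp_all flip: power_add)
  then show "k * 2^(n' - n) \<le> 2^n'" "dyadic_time T n' (k * 2^(n' - n)) = dyadic_time T n k"
    using assms(1) by (simp_all add: dyadic_time_def)
qed

definition grid_exit :: "(real \<Rightarrow> real) \<Rightarrow> real \<Rightarrow> real \<Rightarrow> real \<Rightarrow> nat \<Rightarrow> bool" where
  "grid_exit p T R \<delta> n \<longleftrightarrow> (\<exists>k\<le>2^n. R < p (dyadic_time T n k) \<or> p (dyadic_time T n k) \<le> -\<delta>)"

lemma grid_exit_Suc: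
  assumes "grid_exit p T R (1 / real (Suc n)) n"
  shows "grid_exit p T R (1 / real (Suc (Suc n))) (Suc n)"
proof -
  obtain k where "k \<le> 2^n" and k: "R < p (dyadic_time T n k) \<or> p (dyadic_time T n k) \<le> -1 / real (Suc n)"
    using assms unfolding grid_exit_def by auto
  moreover obtain k' where "k' \<le> 2^Suc n" "dyadic_time T (Suc n) k' = dyadic_time T n k"
    using dyadic_time_refine[OF \<open>k \<le> 2^n\<close>, of "Suc n"] by auto
  moreover have "-1 / real (Suc n) \<le> -1 / real (Suc (Suc n))" by (simp add: frac_le)
  ultimately show ?thesis unfolding grid_exit_def by force
qed

text \<open>Right continuity lets the dyadic grids detect every exit from \<open>[0, R]\<close>; the shrinking lower
  margin \<open>1/(n+1)\<close> catches exits below \<open>0\<close>.\<close>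
lemma path_in_Icc_iff_no_grid_exit:
  fixes p :: "real \<Rightarrow> real"
  assumes rc: "\<And>u. 0 \<le> u \<Longrightarrow> continuous (at_right u) p" and "0 \<le> T"
  shows "(\<forall>t\<in>{0..T}. p t \<in> {0..R}) \<longleftrightarrow> (\<forall>n. \<not> grid_exit p T R (1 / real (Suc n)) n)"
proof
  assume inside: "\<forall>t\<in>{0..T}. p t \<in> {0..R}"
  show "\<forall>n. \<not> grid_exit p T R (1 / real (Suc n)) n"
  proof (intro allI notI)
    fix n assume "grid_exit p T R (1 / real (Suc n)) n"
    then obtain k where "k \<le> 2^n" and "R < p (dyadic_time T n k) \<or> p (dyadic_time T n k) \<le> -1 / real (Suc n)"
      unfolding grid_exit_def by auto
    moreover have "0 \<le> p (dyadic_time T n k)" "p (dyadic_time T n k) \<le> R"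
      using inside dyadic_time_nonneg[OF \<open>0 \<le> T\<close>] dyadic_time_le[OF \<open>0 \<le> T\<close> \<open>k \<le> 2^n\<close>] by auto
    moreover have "-1 / real (Suc n) < 0" by simp
    ultimately show False by linarith
  qed
next
  assume no_exit: "\<forall>n. \<not> grid_exit p T R (1 / real (Suc n)) n"
  show "\<forall>t\<in>{0..T}. p t \<in> {0..R}"
  proof (rule ccontr)
    assume "\<not> (\<forall>t\<in>{0..T}. p t \<in> {0..R})"
    then obtain t where t: "0 \<le> t" "t \<le> T" and bad: "p t < 0 \<or> R < p t" by force
    define Q where "Q x \<longleftrightarrow> (if R < p t then R < x else x < p t / 2)" for x
    obtain n0 k0 where k0: "k0 \<le> 2^n0" "Q (p (dyadic_time T n0 k0))"
    proof (cases "t = T")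
      case True
      then show ?thesis using that[of 1 0] bad by (auto simp: Q_def dyadic_time_def)
    next
      case False
      have lim: "(p \<longlongrightarrow> p t) (at_right t)" using rc[OF t(1)] unfolding continuous_within .
      have "\<forall>\<^sub>F u in at_right t. Q (p u)"
      proof (cases "R < p t")
        case True
        show ?thesis using order_tendstoD(1)[OF lim True] by (rule eventually_mono) (simp add: Q_def True)
      next
        case False
        then have "p t < p t / 2" using bad by simp
        from order_tendstoD(2)[OF lim this] show ?thesis by (rule eventually_mono) (simp add: Q_def False)
      qed
      then obtain b where "b > t" "\<And>y. t < y \<Longrightarrow> y < b \<Longrightarrow> Q (p y)"
        unfolding eventually_at_right_field by blast
      moreover obtain n k where "k \<le> 2^n" "t < dyadic_time T n k" "dyadic_time T n k < t + (b - t)"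
        using dyadic_time_dense[of t T "b - t"] t False \<open>b > t\<close> by auto
      ultimately show ?thesis using that[of k n] by auto
    qed
    show False
    proof (cases "R < p (dyadic_time T n0 k0)")
      case True
      then show False using no_exit k0 unfolding grid_exit_def by blast
    next
      case False
      then have "p t < 0" and le: "p (dyadic_time T n0 k0) \<le> p t / 2"
        using k0(2) bad unfolding Q_def by (auto split: if_splits)
      obtain m where m: "inverse (real (Suc m)) < - p t / 2"
        using reals_Archimedean[of "- p t / 2"] \<open>p t < 0\<close> by auto
      obtain k where k: "k \<le> 2^max n0 m" "dyadic_time T (max n0 m) k = dyadic_time T n0 k0"
        using dyadic_time_refine[OF k0(1), of "max n0 m"] by auto
      have "1 / real (Suc (max n0 m)) \<le> 1 / real (Suc m)" by (simp add: frac_le)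
      then have "p (dyadic_time T (max n0 m) k) \<le> - (1 / real (Suc (max n0 m)))"
        using k(2) le m by (simp add: inverse_eq_divide)
      then show False using no_exit k(1) unfolding grid_exit_def by blast
    qed
  qed
qed

section \<open>Uniform control of the exits\<close>

lemma population_processD:
  assumes "population_process gd gb Pm M N"
  shows "prob_space M" and "\<And>t. 0 \<le> t \<Longrightarrow> N t \<in> borel_measurable M"
    and "\<And>\<omega> u. \<omega> \<in> space M \<Longrightarrow> 0 \<le> u \<Longrightarrow> continuous (at_right u) (\<lambda>s. N s \<omega>)"
    and "\<And>\<omega> u. \<omega> \<in> space M \<Longrightarrow> 0 < u \<Longrightarrow> \<exists>l. ((\<lambda>s. N s \<omega>) \<longlongrightarrow> l) (at_left u)"
    and "\<And>f. C2c f \<Longrightarrow> is_martingale M (natural_filtration M N)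
           (\<lambda>t \<omega>. f (N t \<omega>) - f (N 0 \<omega>) - (LINT s:{0..t}|lborel. generator gd gb Pm f (N s \<omega>)))"
  using assms unfolding population_process_def cadlag_paths_def by (simp_all add: less_imp_le)

lemma prob_path_in_Icc_ge:
  fixes N :: "real \<Rightarrow> 'a \<Rightarrow> real"
  assumes "prob_space M" and meas: "\<And>t. 0 \<le> t \<Longrightarrow> N t \<in> borel_measurable M"
    and rc: "\<And>\<omega> u. \<omega> \<in> space M \<Longrightarrow> 0 \<le> u \<Longrightarrow> continuous (at_right u) (\<lambda>s. N s \<omega>)"
    and "0 \<le> T"
    and exit_le: "\<And>n. measure M {\<omega> \<in> space M. grid_exit (\<lambda>t. N t \<omega>) T R (1 / real (Suc n)) n} \<le> \<epsilon>"
  shows "1 - \<epsilon> \<le> measure M {\<omega> \<in> space M. \<forall>t\<in>{0..T}. N t \<omega> \<in> {0..R}}"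
proof -
  interpret prob_space M by fact
  define E where "E n = {\<omega> \<in> space M. grid_exit (\<lambda>t. N t \<omega>) T R (1 / real (Suc n)) n}" for n
  have [measurable]: "N (dyadic_time T n k) \<in> borel_measurable M" for n k
    using meas dyadic_time_nonneg[OF \<open>0 \<le> T\<close>] by blast
  have "E n \<in> sets M" for n
    unfolding E_def grid_exit_def by measurable
  then have E_sets: "range E \<subseteq> sets M" by auto
  have "incseq E" using grid_exit_Suc by (intro incseq_SucI) (auto simp: E_def)
  have "(\<lambda>n. measure M (E n)) \<longlonglongrightarrow> measure M (\<Union>n. E n)"
    by (rule finite_Lim_measure_incseq[OF E_sets \<open>incseq E\<close>])
  then have "measure M (\<Union>n. E n) \<le> \<epsilon>"
    by (rule LIMSEQ_le_const2) (use exit_le in \<open>simp add: E_def\<close>)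
  moreover have "{\<omega> \<in> space M. \<forall>t\<in>{0..T}. N t \<omega> \<in> {0..R}} = space M - (\<Union>n. E n)"
    using path_in_Icc_iff_no_grid_exit[OF rc \<open>0 \<le> T\<close>] by (auto simp: E_def)
  ultimately show ?thesis using E_sets by (auto simp: prob_compl)
qed

lemma integral_exit_weight_le:
  fixes X :: "'a \<Rightarrow> real"
  assumes "prob_space M" and X_meas: "X \<in> borel_measurable M"
    and X_nonneg: "\<And>\<omega>. \<omega> \<in> space M \<Longrightarrow> 0 \<le> X \<omega>"
    and "closed K" and K_le: "\<And>x. x \<in> K \<Longrightarrow> 2 * x \<le> R" and tight: "1 - e \<le> measure M {\<omega> \<in> space M. X \<omega> \<in> K}"
    and R: "0 < R" and \<delta>: "0 < \<delta>"
  shows "(\<integral>\<omega>. exit_weight R \<delta> (X \<omega>) \<partial>M) \<le> e"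
proof -
  interpret prob_space M by fact
  define A where "A = {\<omega> \<in> space M. X \<omega> \<in> K}"
  have A: "A \<in> sets M" unfolding A_def using X_meas borel_closed[OF \<open>closed K\<close>] by measurable
  have "(\<integral>\<omega>. exit_weight R \<delta> (X \<omega>) \<partial>M) \<le> (\<integral>\<omega>. indicator (space M - A) \<omega> \<partial>M)"
  proof (rule integral_mono)
    show "integrable M (\<lambda>\<omega>. exit_weight R \<delta> (X \<omega>))"
      using X_meas exit_weight_bounds[OF R \<delta>] by (intro integrable_const_bound[where B=1]) auto
    show "integrable M (indicator (space M - A) :: 'a \<Rightarrow> real)"
      using A by (intro integrable_real_indicator) (auto simp: less_top[symmetric] emeasure_finite)
    show "exit_weight R \<delta> (X \<omega>) \<le> indicator (space M - A) \<omega>" if "\<omega> \<in> space M" for \<omega>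
      using that exit_weight_eq_0[OF X_nonneg[OF that] K_le \<delta>] exit_weight_bounds[OF R \<delta>, of "X \<omega>"]
      by (cases "\<omega> \<in> A") (auto simp: A_def)
  qed
  also have "\<dots> = 1 - measure M A" using A by (simp add: prob_compl)
  finally show ?thesis using tight unfolding A_def by simp
qed

lemma immigration_rate_nonneg:
  assumes "characteristic gd gb Pm"
  shows "0 \<le> gb + (\<integral>z. snd z \<partial>Pm)"
proof -
  have "0 \<le> (\<integral>z. snd z \<partial>Pm)"
    using characteristic_AE_event_space[OF assms]
    by (intro integral_nonneg_AE) (auto elim!: eventually_mono dest: event_spaceD)
  then show ?thesis using assms by (simp add: characteristic_def)
qed

lemma population_process_grid_exit_le:
  fixes N :: "real \<Rightarrow> 'a \<Rightarrow> real"
  assumes char: "characteristic gd gb Pm" and proc: "population_process gd gb Pm M N"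
    and R: "0 < R" and \<delta>: "0 < \<delta>" and T: "0 \<le> T"
  shows "measure M {\<omega> \<in> space M. grid_exit (\<lambda>t. N t \<omega>) T R \<delta> n}
           \<le> (\<integral>\<omega>. exit_weight R \<delta> (N 0 \<omega>) \<partial>M) + 4/R * (gb + (\<integral>z. snd z \<partial>Pm)) * T"
proof -
  note meas = population_processD(2)[OF proc] and rc = population_processD(3)[OF proc]
    and ll = population_processD(4)[OF proc]
  note mart = population_processD(5)[OF proc C2c_exit_test[OF R \<delta>]]
  have "prob_space M" by (rule population_processD(1)[OF proc])
  interpret prob_space M by fact
  define K where "K = 4/R * (gb + (\<integral>z. snd z \<partial>Pm))"
  have "0 \<le> K" unfolding K_def using R immigration_rate_nonneg[OF char] by simp
  obtain a b where "0 \<le> b" and growth: "\<And>x. \<bar>generator gd gb Pm (exit_test R \<delta>) x\<bar> \<le> a + b * \<bar>x\<bar>"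
    using generator_exit_test_linear_growth[OF char R \<delta>] by blast
  have int_G: "set_integrable lborel {0..t} (\<lambda>u. generator gd gb Pm (exit_test R \<delta>) (N u \<omega>))"
    if "\<omega> \<in> space M" "0 \<le> t" for \<omega> t
    using borel_measurable_generator_exit_test[OF char R \<delta>] growth \<open>0 \<le> b\<close> rc[OF that(1)] ll[OF that(1)] that(2)
    by (rule set_integrable_comp_cadlag)
  define \<tau> where "\<tau> k = dyadic_time T n (min k (2^n))" for k
  have "mono \<tau>" unfolding \<tau>_def dyadic_time_def mono_def using T
    by (auto intro!: divide_right_mono mult_left_mono)
  have \<tau>: "\<tau> 0 = 0" "\<tau> k \<le> T" for k
    using dyadic_time_le[OF T, of "min k (2^n)" n] by (simp_all add: \<tau>_def dyadic_time_def)
  have "measure M {\<omega> \<in> space M. grid_exit (\<lambda>t. N t \<omega>) T R \<delta> n}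
        \<le> measure M {\<omega> \<in> space M. \<exists>k\<le>2^n. 0 \<le> exit_test R \<delta> (N (\<tau> k) \<omega>) + K * (T - \<tau> k)}"
  proof (rule finite_measure_mono)
    have [measurable]: "N (\<tau> k) \<in> borel_measurable M" for k
      using meas dyadic_time_nonneg[OF T] by (simp add: \<tau>_def)
    show "{\<omega> \<in> space M. \<exists>k\<le>2^n. 0 \<le> exit_test R \<delta> (N (\<tau> k) \<omega>) + K * (T - \<tau> k)} \<in> sets M"
      unfolding exit_test_def by measurable
    have exit: "0 \<le> exit_test R \<delta> x + K * (T - \<tau> k)" if "x \<notin> {-\<delta><..<R}" for x k
      using exit_weight_eq_1[OF R \<delta> that] \<open>0 \<le> K\<close> \<tau>(2)[of k] by (simp add: exit_test_def)
    show "{\<omega> \<in> space M. grid_exit (\<lambda>t. N t \<omega>) T R \<delta> n}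
        \<subseteq> {\<omega> \<in> space M. \<exists>k\<le>2^n. 0 \<le> exit_test R \<delta> (N (\<tau> k) \<omega>) + K * (T - \<tau> k)}"
    proof safe
      fix \<omega> assume "\<omega> \<in> space M" "grid_exit (\<lambda>t. N t \<omega>) T R \<delta> n"
      then obtain k where "k \<le> 2^n" "N (\<tau> k) \<omega> \<notin> {-\<delta><..<R}"
        unfolding grid_exit_def \<tau>_def by force
      then show "\<exists>k\<le>2^n. 0 \<le> exit_test R \<delta> (N (\<tau> k) \<omega>) + K * (T - \<tau> k)"
        using exit by blast
    qed
  qed
  also have "\<dots> \<le> (\<integral>\<omega>. exit_test R \<delta> (N 0 \<omega>) \<partial>M) + 1 + K * T"
  proof (rule martingale_problem_maximal_inequality[OF \<open>prob_space M\<close> meas mart _ _ _ int_G _ \<open>0 \<le> K\<close> \<open>mono \<tau>\<close> \<tau>])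
    show "exit_test R \<delta> \<in> borel_measurable borel" unfolding exit_test_def[abs_def] by measurable
    show "\<bar>exit_test R \<delta> x\<bar> \<le> 1" "-1 \<le> exit_test R \<delta> x" for x
      using exit_weight_bounds[OF R \<delta>, of x] by (auto simp: exit_test_def)
    show "generator gd gb Pm (exit_test R \<delta>) x \<le> K" for x
      unfolding K_def by (rule generator_exit_test_le[OF char R \<delta>])
  qed
  also have "(\<integral>\<omega>. exit_test R \<delta> (N 0 \<omega>) \<partial>M) + 1 = (\<integral>\<omega>. exit_weight R \<delta> (N 0 \<omega>) \<partial>M)"
  proof -
    have "integrable M (\<lambda>\<omega>. exit_weight R \<delta> (N 0 \<omega>))"
      using meas[of 0] exit_weight_bounds[OF R \<delta>] by (intro integrable_const_bound[where B=1]) auto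
    then show ?thesis unfolding exit_test_def by (simp add: prob_space)
  qed
  finally show ?thesis unfolding K_def by simp
qed

lemma population_process_prob_grid_exit_le:
  fixes N :: "real \<Rightarrow> 'a \<Rightarrow> real"
  assumes char: "characteristic gd gb Pm" and C: "gb + (\<integral>z. snd z \<partial>Pm) \<le> C"
    and proc: "population_process gd gb Pm M N"
    and start_nonneg: "\<And>\<omega>. \<omega> \<in> space M \<Longrightarrow> 0 \<le> N 0 \<omega>"
    and "closed K" and K_le: "\<And>x. x \<in> K \<Longrightarrow> 2 * x \<le> R"
    and tight: "1 - e \<le> measure M {\<omega> \<in> space M. N 0 \<omega> \<in> K}"
    and R: "0 < R" and \<delta>: "0 < \<delta>" and T: "0 \<le> T"
  shows "measure M {\<omega> \<in> space M. grid_exit (\<lambda>t. N t \<omega>) T R \<delta> n} \<le> e + 4 * C * T / R"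
proof -
  have "measure M {\<omega> \<in> space M. grid_exit (\<lambda>t. N t \<omega>) T R \<delta> n}
        \<le> (\<integral>\<omega>. exit_weight R \<delta> (N 0 \<omega>) \<partial>M) + 4/R * (gb + (\<integral>z. snd z \<partial>Pm)) * T"
    by (rule population_process_grid_exit_le[OF char proc R \<delta> T])
  also have "(\<integral>\<omega>. exit_weight R \<delta> (N 0 \<omega>) \<partial>M) \<le> e"
    by (rule integral_exit_weight_le[OF population_processD(1,2)[OF proc] start_nonneg
          \<open>closed K\<close> K_le tight R \<delta>]) simp
  also have "4/R * (gb + (\<integral>z. snd z \<partial>Pm)) * T \<le> 4 * C * T / R"
    using C R T by (simp add: mult_right_mono divide_right_mono)
  finally show ?thesis by simp
qed

lemma exists_radius:
  fixes B c e :: real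
  assumes "0 < e"
  shows "\<exists>R>0. B \<le> R \<and> c / R \<le> e"
proof (intro exI conjI)
  define R where "R = max (\<bar>B\<bar> + 1) (\<bar>c\<bar> / e + 1)"
  show "0 < R" "B \<le> R" unfolding R_def by auto
  have "\<bar>c\<bar> / e \<le> R" unfolding R_def by simp
  then have "c \<le> e * R" using assms by (simp add: pos_divide_le_eq mult.commute)
  then show "c / R \<le> e" using \<open>0 < R\<close> by (simp add: pos_divide_le_eq mult.commute)
qed

theorem corollary3p2:
  fixes gd gb :: "'i \<Rightarrow> real"
    and Pm :: "'i \<Rightarrow> (real \<times> real) measure"
    and M :: "'i \<Rightarrow> 'a measure"
    and N0 :: "'i \<Rightarrow> 'a \<Rightarrow> real"
    and N :: "'i \<Rightarrow> real \<Rightarrow> 'a \<Rightarrow> real"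
  assumes char: "\<And>\<alpha>. characteristic (gd \<alpha>) (gb \<alpha>) (Pm \<alpha>)"
    and bdd: "\<exists>C. \<forall>\<alpha>. gb \<alpha> + (\<integral>z. snd z \<partial>Pm \<alpha>) \<le> C"
    and proc: "\<And>\<alpha>. population_process (gd \<alpha>) (gb \<alpha>) (Pm \<alpha>) (M \<alpha>) (N \<alpha>)"
    and N0_rv: "\<And>\<alpha>. N0 \<alpha> \<in> borel_measurable (M \<alpha>)"
    and N0_pos: "\<And>\<alpha> \<omega>. \<omega> \<in> space (M \<alpha>) \<Longrightarrow> 0 < N0 \<alpha> \<omega>"
    and tight: "\<And>e. 0 < e \<Longrightarrow> \<exists>K. compact K \<and>
                  (\<forall>\<alpha>. measure (M \<alpha>) {\<omega> \<in> space (M \<alpha>). N0 \<alpha> \<omega> \<in> K} \<ge> 1 - e)"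
    and start: "\<And>\<alpha> \<omega>. \<omega> \<in> space (M \<alpha>) \<Longrightarrow> N \<alpha> 0 \<omega> = N0 \<alpha> \<omega>"
    and T: "0 \<le> T" and e: "0 < \<epsilon>"
  shows "\<exists>\<Gamma>. compact \<Gamma> \<and> \<Gamma> \<subseteq> {0..} \<and>
           (\<forall>\<alpha>. measure (M \<alpha>) {\<omega> \<in> space (M \<alpha>). \<forall>t\<in>{0..T}. N \<alpha> t \<omega> \<in> \<Gamma>} \<ge> 1 - \<epsilon>)"
proof -
  obtain C where C: "\<And>\<alpha>. gb \<alpha> + (\<integral>z. snd z \<partial>Pm \<alpha>) \<le> C" using bdd by blast
  obtain K where "compact K" and K: "\<And>\<alpha>. 1 - \<epsilon>/2 \<le> measure (M \<alpha>) {\<omega> \<in> space (M \<alpha>). N0 \<alpha> \<omega> \<in> K}"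
    using tight[of "\<epsilon>/2"] e by auto
  obtain B where B: "\<And>x. x \<in> K \<Longrightarrow> \<bar>x\<bar> \<le> B"
    using compact_imp_bounded[OF \<open>compact K\<close>] unfolding bounded_real by blast
  have "0 < \<epsilon>/2" using e by simp
  then obtain R where R: "0 < R" "2 * B \<le> R" "4 * C * T / R \<le> \<epsilon>/2"
    using exists_radius[of "\<epsilon>/2" "2 * B" "4 * C * T"] by blast
  have K_le: "2 * x \<le> R" if "x \<in> K" for x using B[OF that] R(2) by simp
  have "1 - \<epsilon> \<le> measure (M \<alpha>) {\<omega> \<in> space (M \<alpha>). \<forall>t\<in>{0..T}. N \<alpha> t \<omega> \<in> {0..R}}" for \<alpha>
  proof (rule prob_path_in_Icc_ge[OF population_processD(1-3)[OF proc] T])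
    fix n
    have "{\<omega> \<in> space (M \<alpha>). N \<alpha> 0 \<omega> \<in> K} = {\<omega> \<in> space (M \<alpha>). N0 \<alpha> \<omega> \<in> K}"
      using start by auto
    then have "measure (M \<alpha>) {\<omega> \<in> space (M \<alpha>). grid_exit (\<lambda>t. N \<alpha> t \<omega>) T R (1 / real (Suc n)) n}
               \<le> \<epsilon>/2 + 4 * C * T / R"
      using K[of \<alpha>] start N0_pos
      by (intro population_process_prob_grid_exit_le[OF char C proc _ compact_imp_closed[OF \<open>compact K\<close>]
            K_le _ R(1) _ T]) (auto simp: less_imp_le)
    then show "measure (M \<alpha>) {\<omega> \<in> space (M \<alpha>). grid_exit (\<lambda>t. N \<alpha> t \<omega>) T R (1 / real (Suc n)) n} \<le> \<epsilon>"
      using R(3) by simp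
  qed
  then show ?thesis
    by (intro exI[of _ "{0..R}"] conjI allI) auto
qed

end
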